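(* Let $\Omega$ be a bounded domain in $\mathbb R^n$, $n\ge3$, whose boundary $\partial\Omega$ is a smooth hypersurface, and let $(f,\Gamma)$ satisfy the standing structural assumptions. There exists $c_0=c_0(\Omega,f,\Gamma)>0$ such that: if $0<w\in LSC(\Omega)$ is a viscosity super-solution of $f(\lambda(-A^u))=1$ in $\Omega$ and $w\ge c$ on $\partial\Omega$ (i.e. $\liminf_{x\to\xi}w(x)\ge c$ for all $\xi\in\partial\Omega$) for some constant $c\ge c_0$, then for all $x\in\Omega$, $$w(x)\ge\frac{\alpha}{2^{\frac{n-2}{2}}\Big[\big(2+\alpha^{-\frac{2}{n-2}}c_0^{\frac{2}{n-2}}\,d(x)\big)d(x)+\alpha^{\frac{2}{n-2}}c^{-\frac{2}{n-2}}\Big]^{\frac{n-2}{2}}},\qquad d(x)=\mathrm{dist}(x,\partial\Omega),$$ where $\alpha=\alpha(f)$ is the constant of the canonical solutions.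
   Context: Let $n\ge3$. For a positive $C^2$ function $u$, its conformal Hessian is $A^u=-\frac{2}{n-2}u^{-\frac{n+2}{n-2}}\nabla^2u+\frac{2n}{(n-2)^2}u^{-\frac{2n}{n-2}}\nabla u\otimes\nabla u-\frac{2}{(n-2)^2}u^{-\frac{2n}{n-2}}|\nabla u|^2I$, and $\lambda(-A^u)$ is the vector of eigenvalues of $-A^u$. Let $\Gamma_n=\{\mu:\mu_i>0\ \forall i\}$. Standing structural assumptions on $(f,\Gamma)$: $\Gamma\subset\mathbb R^n$ is an open symmetric cone with vertex at the origin, $\Gamma+\Gamma_n\subset\Gamma$; $f\in C^0(\bar\Gamma)$ symmetric, $f>0$ in $\Gamma$, $f=0$ on $\partial\Gamma$, $f(\lambda+\mu)\ge f(\lambda)$ for $\lambda\in\Gamma,\mu\in\Gamma_n$, $f$ homogeneous of some positive degree. Viscosity super-solution: $w\in LSC(\Omega)$ (lower semicontinuous, values in $\mathbb R\cup\{+\infty\}$, $w\not\equiv+\infty$) such that for every $x_0\in\Omega$, $\varphi\in C^2(\Omega)$ with $(w-\varphi)(x_0)=0$, $w-\varphi\ge0$ near $x_0$, either $\lambda(-A^\varphi(x_0))\notin\bar\Gamma$ or $f(\lambda(-A^\varphi(x_0)))\le1$. Canonical solutions: there is a unique constant $\alpha=\alpha(f)>0$ such that for all $R>0$, $x_0\in\mathbb R^n$ the functions $u^{(in)}_{R,x_0}(x)=\alpha\big(\frac{R}{R^2-|x-x_0|^2}\big)^{\frac{n-2}{2}}$ and $u^{(out)}_{R,x_0}(x)=\alpha\big(\frac{R}{|x-x_0|^2-R^2}\big)^{\frac{n-2}{2}}$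 satisfy $f(\lambda(-A^{u}))=1$ in $B_R(x_0)$ and in $\mathbb R^n\setminus\bar B_R(x_0)$ respectively. *)

theory Defs
  imports "HOL-Analysis.Analysis"
begin

text \<open>Vector of eigenvalues of a (symmetric) matrix, in some order: the diagonal of an
orthogonal diagonalisation.  Since f and Gamma are symmetric, the order is irrelevant.\<close>
definition diag_mat :: "real^'n \<Rightarrow> real^'n^'n" where
  "diag_mat l = (\<chi> i j. if i = j then l $ i else 0)"

definition eigvals :: "real^'n^'n \<Rightarrow> real^'n" where
  "eigvals M = (SOME l. \<exists>Q. orthogonal_matrix Q \<and> transpose Q ** M ** Q = diag_mat l)"

definition conf_hess :: "real \<Rightarrow> real^'n \<Rightarrow> real^'n^'n \<Rightarrow> real^'n^'n" where
  "conf_hess u g H =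
     (let n = real CARD('n) in
        (- 2 / (n - 2) * u powr (- (n + 2) / (n - 2))) *\<^sub>R H
      + (2 * n / (n - 2)^2 * u powr (- 2 * n / (n - 2))) *\<^sub>R (\<chi> i j. g $ i * g $ j)
      - (2 / (n - 2)^2 * u powr (- 2 * n / (n - 2)) * (norm g)^2) *\<^sub>R mat 1)"

definition pos_cone :: "(real^'n) set" where
  "pos_cone = {l. \<forall>i. l $ i > 0}"

definition structural :: "(real^'n \<Rightarrow> real) \<Rightarrow> (real^'n) set \<Rightarrow> bool" where
  "structural f \<Gamma> \<longleftrightarrow>
     open \<Gamma> \<and>
     (\<forall>l\<in>\<Gamma>. \<forall>t>0. t *\<^sub>R l \<in> \<Gamma>) \<and>
     (\<forall>p. p permutes (UNIV::'n set) \<longrightarrow> (\<forall>l\<in>\<Gamma>. (\<chi> i. l $ p i) \<in> \<Gamma>)) \<and>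
     (\<forall>l\<in>\<Gamma>. \<forall>m\<in>pos_cone. l + m \<in> \<Gamma>) \<and>
     continuous_on (closure \<Gamma>) f \<and>
     (\<forall>p. p permutes (UNIV::'n set) \<longrightarrow> (\<forall>l\<in>closure \<Gamma>. f (\<chi> i. l $ p i) = f l)) \<and>
     (\<forall>l\<in>\<Gamma>. f l > 0) \<and>
     (\<forall>l\<in>frontier \<Gamma>. f l = 0) \<and>
     (\<forall>l\<in>\<Gamma>. \<forall>m\<in>pos_cone. f (l + m) \<ge> f l) \<and>
     (\<exists>d>0. \<forall>l\<in>closure \<Gamma>. \<forall>t>0. f (t *\<^sub>R l) = t powr d * f l)"

definition classical_sol :: "(real^'n \<Rightarrow> real) \<Rightarrow> (real^'n) set \<Rightarrow> (real^'n) set \<Rightarrow> (real^'n \<Rightarrow> real) \<Rightarrow> bool" where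
  "classical_sol f \<Gamma> S u \<longleftrightarrow>
     (\<exists>Du Hu. continuous_on S Hu \<and>
       (\<forall>x\<in>S. u x > 0 \<and> (u has_derivative (\<lambda>h. Du x \<bullet> h)) (at x) \<and>
               (Du has_derivative (\<lambda>h. Hu x *v h)) (at x) \<and>
               eigvals (- conf_hess (u x) (Du x) (Hu x)) \<in> \<Gamma> \<and>
               f (eigvals (- conf_hess (u x) (Du x) (Hu x))) = 1))"

definition canonical_const :: "(real^'n \<Rightarrow> real) \<Rightarrow> (real^'n) set \<Rightarrow> real \<Rightarrow> bool" where
  "canonical_const f \<Gamma> \<alpha> \<longleftrightarrow> \<alpha> > 0 \<and>
     (\<forall>R>0. \<forall>x0::real^'n.
        classical_sol f \<Gamma> (ball x0 R)
          (\<lambda>x. \<alpha> * (R / (R^2 - (norm (x - x0))^2)) powr ((real CARD('n) - 2) / 2)) \<and>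
        classical_sol f \<Gamma> (- cball x0 R)
          (\<lambda>x. \<alpha> * (R / ((norm (x - x0))^2 - R^2)) powr ((real CARD('n) - 2) / 2)))"

fun Ck :: "nat \<Rightarrow> (real^'n) set \<Rightarrow> (real^'n \<Rightarrow> real) \<Rightarrow> bool" where
  "Ck 0 S g = continuous_on S g"
| "Ck (Suc k) S g = (\<exists>Dg. (\<forall>x\<in>S. (g has_derivative (\<lambda>h. Dg x \<bullet> h)) (at x)) \<and>
                          (\<forall>i. Ck k S (\<lambda>x. Dg x $ i)))"

definition smooth_bdd_domain :: "(real^'n) set \<Rightarrow> bool" where
  "smooth_bdd_domain \<Omega> \<longleftrightarrow> open \<Omega> \<and> connected \<Omega> \<and> \<Omega> \<noteq> {} \<and> bounded \<Omega> \<and>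
     (\<forall>\<xi>\<in>frontier \<Omega>. \<exists>U \<rho>. open U \<and> \<xi> \<in> U \<and> (\<forall>k. Ck k U \<rho>) \<and>
         (\<forall>x\<in>U. \<exists>g. (\<rho> has_derivative (\<lambda>h. g \<bullet> h)) (at x) \<and> g \<noteq> 0) \<and>
         U \<inter> \<Omega> = {x\<in>U. \<rho> x < 0} \<and> U \<inter> frontier \<Omega> = {x\<in>U. \<rho> x = 0})"

definition lsc_on :: "(real^'n) set \<Rightarrow> (real^'n \<Rightarrow> ereal) \<Rightarrow> bool" where
  "lsc_on \<Omega> w \<longleftrightarrow> (\<forall>x\<in>\<Omega>. w x \<le> Liminf (at x) w)"

definition visc_super :: "(real^'n \<Rightarrow> real) \<Rightarrow> (real^'n) set \<Rightarrow> (real^'n) set \<Rightarrow> (real^'n \<Rightarrow> ereal) \<Rightarrow> bool" where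
  "visc_super f \<Gamma> \<Omega> w \<longleftrightarrow>
     lsc_on \<Omega> w \<and> (\<forall>x\<in>\<Omega>. w x \<noteq> - \<infinity>) \<and> (\<exists>x\<in>\<Omega>. w x \<noteq> \<infinity>) \<and>
     (\<forall>x0\<in>\<Omega>. \<forall>\<phi> D\<phi> H\<phi>.
        (continuous_on \<Omega> H\<phi> \<and>
         (\<forall>x\<in>\<Omega>. (\<phi> has_derivative (\<lambda>h. D\<phi> x \<bullet> h)) (at x) \<and>
                  (D\<phi> has_derivative (\<lambda>h. H\<phi> x *v h)) (at x)) \<and>
         w x0 = ereal (\<phi> x0) \<and>
         (\<forall>\<^sub>F x in at x0. ereal (\<phi> x) \<le> w x))
        \<longrightarrow> (eigvals (- conf_hess (\<phi> x0) (D\<phi> x0) (H\<phi> x0)) \<notin> closure \<Gamma> \<or>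
             f (eigvals (- conf_hess (\<phi> x0) (D\<phi> x0) (H\<phi> x0))) \<le> 1))"

end

theory Submission
  imports Defs
begin

text \<open>Since the boundary is smooth, \<Omega> satisfies a uniform exterior sphere condition with some
  radius r; put c0 = \<alpha> r^(-(n-2)/2). Given x, take a nearest boundary point \<xi> and the exterior
  ball B(y, r) touching the boundary at \<xi>. With e = (\<alpha>/c)^(2/(n-2)) and the radius R < r defined
  by r^2 - R^2 = e R, the exterior canonical solution u with centre y and radius R is at most c
  on \<Omega>. Since -A^(tu) = t^(-4/(n-2)) (-A^u), the multiple t u with t < 1 is a strict
  sub-solution and never touches w from below; sliding t up to 1 gives u \<le> w, and evaluating
  u at x, where |x - y| \<le> r + d(x), gives the bound.\<close>

section \<open>Spectral theorem for real symmetric matrices\<close>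

lemma linear_le_quadratic_imp_zero:
  fixes b C :: real
  assumes "\<And>t. 2 * t * b \<le> t\<^sup>2 * C"
  shows "b = 0"
proof -
  define t where "t = b / (\<bar>C\<bar> + 1)"
  have "2 * t * b \<le> t\<^sup>2 * C" by (rule assms)
  moreover have "(\<bar>C\<bar> + 1)\<^sup>2 * (2 * t * b) = 2 * b\<^sup>2 * (\<bar>C\<bar> + 1)"
    and "(\<bar>C\<bar> + 1)\<^sup>2 * (t\<^sup>2 * C) = b\<^sup>2 * C"
    by (simp_all add: t_def power_divide power2_eq_square)
  ultimately have "2 * b\<^sup>2 * (\<bar>C\<bar> + 1) \<le> b\<^sup>2 * C"
    by (metis mult_left_mono zero_le_power2)
  then have "b\<^sup>2 * (2 * \<bar>C\<bar> + 2 - C) \<le> 0" by (simp add: algebra_simps)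
  moreover have "2 * \<bar>C\<bar> + 2 - C > 0" by linarith
  ultimately have "b\<^sup>2 \<le> 0" by (simp add: mult_le_0_iff)
  then show ?thesis by simp
qed

lemma symmetric_matrix_inner_commute:
  fixes M :: "real^'n^'n"
  assumes "transpose M = M"
  shows "x \<bullet> (M *v y) = y \<bullet> (M *v x)"
proof -
  have "x \<bullet> (M *v y) = (transpose M *v x) \<bullet> y" by (simp add: dot_lmul_matrix)
  then show ?thesis using assms by (simp add: inner_commute)
qed

lemma symmetric_quadratic_form_add_scaleR:
  fixes M :: "real^'n^'n"
  assumes "transpose M = M"
  shows "(x + t *\<^sub>R y) \<bullet> (M *v (x + t *\<^sub>R y))
           = x \<bullet> (M *v x) + 2 * t * (y \<bullet> (M *v x)) + t\<^sup>2 * (y \<bullet> (M *v y))"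
  using symmetric_matrix_inner_commute[OF assms, of x y]
  by (simp add: matrix_vector_right_distrib matrix_vector_mult_scaleR inner_add_left
      inner_add_right power2_eq_square algebra_simps)

text \<open>A maximiser of the quadratic form on the unit sphere of an invariant subspace is an
  eigenvector: the first variation in every direction of the subspace orthogonal to it vanishes.\<close>
lemma symmetric_matrix_eigenvector_in_invariant_subspace:
  fixes M :: "real^'n^'n"
  assumes sym: "transpose M = M" and S: "subspace S"
    and inv: "\<And>x. x \<in> S \<Longrightarrow> M *v x \<in> S" and "a \<in> S" "a \<noteq> 0"
  shows "\<exists>x\<in>S. norm x = 1 \<and> M *v x = (x \<bullet> (M *v x)) *\<^sub>R x"
proof -
  let ?q = "\<lambda>z. z \<bullet> (M *v z)"
  define K where "K = S \<inter> sphere 0 1"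
  have "compact K" unfolding K_def
    using closed_subspace[OF S] compact_Int_closed[of "sphere 0 1" S] by (simp add: Int_commute)
  moreover have "(1 / norm a) *\<^sub>R a \<in> K" using assms(4,5) S unfolding K_def by (simp add: subspace_scale)
  moreover have "continuous_on K ?q" by (intro continuous_intros)
  ultimately obtain x where xK: "x \<in> K" and xmax: "\<And>z. z \<in> K \<Longrightarrow> ?q z \<le> ?q x"
    using continuous_attains_sup[of K ?q] by blast
  have xS: "x \<in> S" and xx: "x \<bullet> x = 1" using xK by (auto simp: K_def norm_eq_1)
  have q_le: "?q z \<le> ?q x * (z \<bullet> z)" if "z \<in> S" for z
  proof (cases "z = 0")
    case False
    have "(1 / norm z) *\<^sub>R z \<in> K" using that False S by (simp add: K_def subspace_scale)
    then have "?q ((1 / norm z) *\<^sub>R z) \<le> ?q x" by (rule xmax)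
    then have "(1 / norm z)\<^sup>2 * ?q z \<le> ?q x"
      by (simp add: matrix_vector_mult_scaleR power2_eq_square)
    then show ?thesis using False by (simp add: field_simps power2_norm_eq_inner)
  qed simp
  have orth: "y \<bullet> (M *v x) = 0" if yS: "y \<in> S" and yx: "y \<bullet> x = 0" for y
  proof (rule linear_le_quadratic_imp_zero)
    fix t
    have "x + t *\<^sub>R y \<in> S" using xS yS S by (simp add: subspace_add subspace_scale)
    moreover have "(x + t *\<^sub>R y) \<bullet> (x + t *\<^sub>R y) = 1 + t\<^sup>2 * (y \<bullet> y)"
      using xx yx by (simp add: inner_add_left inner_add_right inner_commute power2_eq_square)
    ultimately have "?q (x + t *\<^sub>R y) \<le> ?q x * (1 + t\<^sup>2 * (y \<bullet> y))" using q_le by metis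
    then show "2 * t * (y \<bullet> (M *v x)) \<le> t\<^sup>2 * (?q x * (y \<bullet> y) - ?q y)"
      unfolding symmetric_quadratic_form_add_scaleR[OF sym] by (simp add: algebra_simps)
  qed
  define y where "y = M *v x - ?q x *\<^sub>R x"
  have yS: "y \<in> S" unfolding y_def using inv[OF xS] xS S by (simp add: subspace_diff subspace_scale)
  have yx: "y \<bullet> x = 0" unfolding y_def using xx
    by (simp add: inner_diff_left inner_diff_right inner_commute)
  have "y \<bullet> y = y \<bullet> (M *v x) - ?q x * (y \<bullet> x)" unfolding y_def by (simp add: inner_diff_right)
  then have "y = 0" using orth[OF yS yx] yx by simp
  then show ?thesis using xS xx unfolding y_def by (intro bexI[of _ x]) (auto simp: norm_eq_1)
qed

lemma symmetric_matrix_orthonormal_eigenvectors: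
  fixes M :: "real^'n^'n" and I :: "'n set"
  assumes sym: "transpose M = M" and "finite I"
  shows "\<exists>v \<mu>. (\<forall>i\<in>I. \<forall>j\<in>I. v i \<bullet> v j = (if i = j then 1 else 0)) \<and>
                (\<forall>i\<in>I. M *v v i = \<mu> i *\<^sub>R v i)"
  using \<open>finite I\<close>
proof (induction I rule: finite_induct)
  case (insert a I)
  then obtain v \<mu> where orth: "\<forall>i\<in>I. \<forall>j\<in>I. v i \<bullet> v j = (if i = j then 1 else 0)"
    and eig: "\<forall>i\<in>I. M *v v i = \<mu> i *\<^sub>R v i" by blast
  define S where "S = {x. \<forall>i\<in>I. v i \<bullet> x = 0}"
  have sub: "subspace S" unfolding S_def subspace_def by (auto simp: inner_add_right)
  have inv: "M *v x \<in> S" if "x \<in> S" for x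
    using that eig symmetric_matrix_inner_commute[OF sym, of _ x] unfolding S_def
    by (auto simp: inner_commute)
  have "card (v ` I) < CARD('n)"
  proof -
    have "I \<subset> UNIV" using insert(2) by blast
    then have "card I < CARD('n)" by (rule psubset_card_mono[rotated]) simp
    then show ?thesis using card_image_le[OF insert(1), of v] by linarith
  qed
  have "span (v ` I) \<noteq> UNIV"
  proof
    assume "span (v ` I) = UNIV"
    then have "dim (v ` I) = DIM(real^'n)" using dim_eq_full by blast
    moreover have "dim (v ` I) \<le> card (v ` I)" using insert(1) by (simp add: dim_le_card')
    ultimately show False using \<open>card (v ` I) < CARD('n)\<close> by simp
  qed
  then obtain b where b: "b \<noteq> 0" "\<forall>x\<in>span (v ` I). b \<bullet> x = 0"
    using span_not_UNIV_orthogonal by blast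
  have "b \<in> S" unfolding S_def
  proof (intro CollectI ballI)
    fix i assume "i \<in> I"
    then have "v i \<in> span (v ` I)" by (intro span_base imageI)
    then show "v i \<bullet> b = 0" using b(2) inner_commute by metis
  qed
  then obtain x where x: "x \<in> S" "norm x = 1" "M *v x = (x \<bullet> (M *v x)) *\<^sub>R x"
    using symmetric_matrix_eigenvector_in_invariant_subspace[OF sym sub inv _ b(1)] by blast
  have "x \<bullet> x = 1" "\<And>i. i \<in> I \<Longrightarrow> v i \<bullet> x = 0" using x by (auto simp: S_def norm_eq_1)
  then show ?case
    using orth eig insert(2) x(3)
    by (intro exI[of _ "v(a := x)"] exI[of _ "\<mu>(a := x \<bullet> (M *v x))"]) (auto simp: inner_commute)
qed simp

lemma symmetric_matrix_orthogonal_diagonalization: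
  fixes M :: "real^'n^'n"
  assumes sym: "transpose M = M"
  shows "\<exists>Q l. orthogonal_matrix Q \<and> transpose Q ** M ** Q = diag_mat l"
proof -
  obtain v and \<mu> :: "'n \<Rightarrow> real" where orth: "\<forall>i j. v i \<bullet> v j = (if i = j then 1 else 0)"
    and eig: "\<forall>i. M *v v i = \<mu> i *\<^sub>R v i"
    using symmetric_matrix_orthonormal_eigenvectors[OF sym, of UNIV] by auto
  define Q :: "real^'n^'n" where "Q = transpose (\<chi> i. v i)"
  have "transpose Q ** Q = mat 1"
    unfolding Q_def using orth
    by (simp add: matrix_matrix_mult_def mat_def vec_eq_iff transpose_def inner_vec_def)
  moreover have "(transpose Q ** M ** Q) $ i $ j = v i \<bullet> (M *v v j)" for i j
    unfolding Q_def
    by (simp add: matrix_matrix_mult_def matrix_vector_mult_def transpose_def inner_vec_def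
        sum_distrib_left sum_distrib_right mult.assoc mult.commute mult.left_commute) (rule sum.swap)
  then have "transpose Q ** M ** Q = diag_mat (\<chi> i. \<mu> i)"
    using orth eig by (simp add: vec_eq_iff diag_mat_def)
  ultimately show ?thesis by (auto simp: orthogonal_matrix)
qed

text \<open>Two diagonalisations give conjugate diagonal matrices; a nonzero term of the
  determinant of the (orthogonal) conjugating matrix yields the matching permutation.\<close>
lemma orthogonal_diagonalizations_permute:
  fixes M Q1 Q2 :: "real^'n^'n"
  assumes o1: "orthogonal_matrix Q1" and o2: "orthogonal_matrix Q2"
    and d1: "transpose Q1 ** M ** Q1 = diag_mat l1"
    and d2: "transpose Q2 ** M ** Q2 = diag_mat l2"
  shows "\<exists>p. p permutes UNIV \<and> (\<forall>i. l1 $ i = l2 $ p i)"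
proof -
  define P where "P = transpose Q1 ** Q2"
  have q1: "Q1 ** transpose Q1 = mat 1" and q2: "Q2 ** transpose Q2 = mat 1"
    using o1 o2 by (auto simp: orthogonal_matrix_def)
  have "diag_mat l1 ** P = transpose Q1 ** M ** (Q1 ** transpose Q1) ** Q2"
    unfolding P_def d1[symmetric] by (simp add: matrix_mul_assoc)
  also have "\<dots> = transpose Q1 ** (Q2 ** transpose Q2) ** M ** Q2"
    using q1 q2 by (simp add: matrix_mul_assoc)
  also have "\<dots> = P ** diag_mat l2"
    unfolding P_def d2[symmetric] by (simp add: matrix_mul_assoc)
  finally have comm: "diag_mat l1 ** P = P ** diag_mat l2" .
  have entry: "l1 $ i * P $ i $ j = P $ i $ j * l2 $ j" for i j
  proof -
    have "(diag_mat l1 ** P) $ i $ j = l1 $ i * P $ i $ j"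
      and "(P ** diag_mat l2) $ i $ j = P $ i $ j * l2 $ j"
      by (simp_all add: matrix_matrix_mult_def diag_mat_def if_distrib[where f = "\<lambda>a. a * _"]
          if_distrib[where f = "\<lambda>a. _ * a"] cong: if_cong)
    then show ?thesis using comm by (metis mult.commute)
  qed
  have "orthogonal_matrix P" unfolding P_def using o1 o2 by (simp add: orthogonal_matrix_mul)
  then have "det P \<noteq> 0" using det_orthogonal_matrix by force
  then obtain p where p: "p permutes UNIV" and "prod (\<lambda>i. P $ i $ p i) UNIV \<noteq> 0"
    unfolding det_def by (metis (no_types, lifting) mem_Collect_eq mult_zero_right sum.neutral)
  then have "P $ i $ p i \<noteq> 0" for i by (simp add: prod_zero_iff)
  then show ?thesis using p entry by (metis mult.commute mult_right_cancel)
qed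

lemma eigvals_diagonalize:
  fixes M :: "real^'n^'n"
  assumes "transpose M = M"
  shows "\<exists>Q. orthogonal_matrix Q \<and> transpose Q ** M ** Q = diag_mat (eigvals M)"
  unfolding eigvals_def
  by (rule someI_ex[where P = "\<lambda>l. \<exists>Q. orthogonal_matrix Q \<and> transpose Q ** M ** Q = diag_mat l"])
     (use symmetric_matrix_orthogonal_diagonalization[OF assms] in blast)

lemma matrix_scaleR_mult_left:
  "((c::real) *\<^sub>R (A::real^'n^'m)) ** (B::real^'k^'n) = c *\<^sub>R (A ** B)"
  by (simp add: vec_eq_iff matrix_matrix_mult_def sum_distrib_left mult.assoc)

lemma matrix_scaleR_mult_right:
  "(A::real^'n^'m) ** ((c::real) *\<^sub>R (B::real^'k^'n)) = c *\<^sub>R (A ** B)"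
  by (simp add: vec_eq_iff matrix_matrix_mult_def sum_distrib_left mult.left_commute)

lemma diag_mat_scaleR: "diag_mat ((c::real) *\<^sub>R l) = c *\<^sub>R diag_mat l"
  by (simp add: vec_eq_iff diag_mat_def)

lemma eigvals_scaleR_permutes:
  fixes M :: "real^'n^'n"
  assumes sym: "transpose M = M" and "s > 0"
  shows "\<exists>p. p permutes UNIV \<and> eigvals (s *\<^sub>R M) = s *\<^sub>R (\<chi> i. eigvals M $ p i)"
proof -
  have "transpose (s *\<^sub>R M) = s *\<^sub>R M" using sym by (simp add: transpose_scalar)
  then obtain Q where Q: "orthogonal_matrix Q"
    and "transpose Q ** (s *\<^sub>R M) ** Q = diag_mat (eigvals (s *\<^sub>R M))"
    using eigvals_diagonalize by blast
  then have "s *\<^sub>R (transpose Q ** M ** Q) = s *\<^sub>R diag_mat ((1 / s) *\<^sub>R eigvals (s *\<^sub>R M))"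
    using \<open>s > 0\<close> by (simp add: matrix_scaleR_mult_left matrix_scaleR_mult_right diag_mat_scaleR)
  then have "transpose Q ** M ** Q = diag_mat ((1 / s) *\<^sub>R eigvals (s *\<^sub>R M))"
    using \<open>s > 0\<close> by simp
  moreover obtain Q0 where "orthogonal_matrix Q0" "transpose Q0 ** M ** Q0 = diag_mat (eigvals M)"
    using eigvals_diagonalize[OF sym] by blast
  ultimately obtain p where p: "p permutes UNIV"
    and "\<forall>i. ((1 / s) *\<^sub>R eigvals (s *\<^sub>R M)) $ i = eigvals M $ p i"
    using orthogonal_diagonalizations_permute[OF Q] by blast
  then have "eigvals (s *\<^sub>R M) = s *\<^sub>R (\<chi> i. eigvals M $ p i)"
    using \<open>s > 0\<close> by (auto simp: vec_eq_iff field_simps)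
  with p show ?thesis by blast
qed

section \<open>Scaling of the conformal Hessian\<close>

lemma structural_scaled_permutation_gt_1:
  fixes f :: "real^'n \<Rightarrow> real"
  assumes st: "structural f \<Gamma>" and l: "l \<in> \<Gamma>" "f l = 1"
    and p: "p permutes UNIV" and s: "s > 1"
  shows "s *\<^sub>R (\<chi> i. l $ p i) \<in> \<Gamma> \<and> f (s *\<^sub>R (\<chi> i. l $ p i)) > 1"
proof -
  have cone: "\<forall>l\<in>\<Gamma>. \<forall>t>0. t *\<^sub>R l \<in> \<Gamma>"
    and perm_cone: "\<forall>l\<in>\<Gamma>. (\<chi> i. l $ p i) \<in> \<Gamma>"
    and perm_f: "\<forall>l\<in>closure \<Gamma>. f (\<chi> i. l $ p i) = f l"
    and "\<exists>d>0. \<forall>l\<in>closure \<Gamma>. \<forall>t>0. f (t *\<^sub>R l) = t powr d * f l"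
    using st p unfolding structural_def by blast+
  then obtain d where d: "d > 0" "\<forall>l\<in>closure \<Gamma>. \<forall>t>0. f (t *\<^sub>R l) = t powr d * f l"
    by blast
  have pl: "(\<chi> i. l $ p i) \<in> \<Gamma>" using perm_cone l by blast
  have "l \<in> closure \<Gamma>" using l(1) closure_subset by blast
  then have "f (\<chi> i. l $ p i) = 1" using perm_f l(2) by simp
  moreover have "(\<chi> i. l $ p i) \<in> closure \<Gamma>" using pl closure_subset by blast
  ultimately have "f (s *\<^sub>R (\<chi> i. l $ p i)) = s powr d" using d(2) s by simp
  moreover have "s powr d > 1" using s d(1) powr_less_mono[of 0 d s] by simp
  ultimately show ?thesis using cone pl s by simp
qed

lemma structural_eigvals_scaleR_gt_1:
  fixes M :: "real^'n^'n"
  assumes st: "structural f \<Gamma>" and sym: "transpose M = M"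
    and "eigvals M \<in> \<Gamma>" "f (eigvals M) = 1" and s: "s > 1"
  shows "eigvals (s *\<^sub>R M) \<in> closure \<Gamma> \<and> f (eigvals (s *\<^sub>R M)) > 1"
proof -
  have "s > 0" using s by simp
  then obtain p where "p permutes UNIV" "eigvals (s *\<^sub>R M) = s *\<^sub>R (\<chi> i. eigvals M $ p i)"
    using eigvals_scaleR_permutes[OF sym] by blast
  then show ?thesis
    using structural_scaled_permutation_gt_1[OF st assms(3,4) _ s] closure_subset by auto
qed

lemma neg_conf_hess_symmetric:
  assumes "transpose H = H"
  shows "transpose (- conf_hess u g (H::real^'n^'n)) = - conf_hess u g H"
proof -
  have "transpose H $ i $ j = H $ i $ j" for i j using assms by simp
  then have "H $ j $ i = H $ i $ j" for i j by (simp add: transpose_def)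
  then show ?thesis
    by (simp add: vec_eq_iff transpose_def conf_hess_def Let_def mat_def mult.commute)
qed

lemma mult_powr_scale:
  fixes t u :: real
  assumes "t > 0" "u > 0"
  shows "t powr m * (t * u) powr a = t powr (m + a) * u powr a"
  using assms by (simp add: powr_mult powr_add)

lemma conf_hess_scaleR:
  assumes n3: "CARD('n) \<ge> 3" and t: "t > 0" and u: "u > 0"
  shows "conf_hess (t * u) (t *\<^sub>R g) (t *\<^sub>R (H::real^'n^'n))
       = (t powr (- 4 / (real CARD('n) - 2))) *\<^sub>R conf_hess u g H"
proof -
  define n where "n = real CARD('n)"
  define a where "a = - (n + 2) / (n - 2)"
  define b where "b = - 2 * n / (n - 2)"
  define s where "s = t powr (- 4 / (n - 2))"
  define G where "G = (\<chi> i j. g $ i * g $ j :: real^'n^'n)"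
  have "n - 2 > 0" using n3 unfolding n_def by simp
  then have "1 + a = - 4 / (n - 2)" "2 + b = - 4 / (n - 2)"
    unfolding a_def b_def by (simp_all add: field_simps)
  moreover have "t = t powr 1" "t\<^sup>2 = t powr 2" using t by (simp_all add: powr_numeral)
  ultimately have ea: "t * (t * u) powr a = s * u powr a" and eb: "t\<^sup>2 * (t * u) powr b = s * u powr b"
    using mult_powr_scale[OF t u, of 1 a] mult_powr_scale[OF t u, of 2 b] unfolding s_def by metis+
  have mult_left_eq_scaled: "c * x = s * (c * y)" if "x = s * y" for c x y :: real
    using that by simp
  have G: "(\<chi> i j. (t *\<^sub>R g) $ i * (t *\<^sub>R g) $ j) = t\<^sup>2 *\<^sub>R G"
    by (simp add: G_def vec_eq_iff power2_eq_square)
  have "(norm (t *\<^sub>R g))\<^sup>2 = t\<^sup>2 * (norm g)\<^sup>2" using t by (simp add: power_mult_distrib)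
  moreover have "(- 2 / (n - 2) * (t * u) powr a) * t = s * (- 2 / (n - 2) * u powr a)"
    and "(2 * n / (n - 2)\<^sup>2 * (t * u) powr b) * t\<^sup>2 = s * (2 * n / (n - 2)\<^sup>2 * u powr b)"
    and "2 / (n - 2)\<^sup>2 * (t * u) powr b * (t\<^sup>2 * (norm g)\<^sup>2) = s * (2 / (n - 2)\<^sup>2 * u powr b * (norm g)\<^sup>2)"
    using mult_left_eq_scaled[OF ea, of "- 2 / (n - 2)"] mult_left_eq_scaled[OF eb, of "2 * n / (n - 2)\<^sup>2"]
      mult_left_eq_scaled[OF eb, of "2 / (n - 2)\<^sup>2 * (norm g)\<^sup>2"]
    by (simp_all add: ac_simps)
  ultimately show ?thesis
    unfolding conf_hess_def Let_def n_def[symmetric] a_def[symmetric] b_def[symmetric] G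
      G_def[symmetric] s_def[symmetric]
    by (simp only: scaleR_scaleR scaleR_add_right scaleR_diff_right)
qed

section \<open>Hessian of the exterior canonical solutions\<close>

lemma has_derivative_real_compose:
  fixes s :: "real^'n \<Rightarrow> real"
  assumes "(s has_derivative (\<lambda>h. a \<bullet> h)) (at x)" and "(\<phi> has_real_derivative d) (at (s x))"
  shows "((\<lambda>x. \<phi> (s x)) has_derivative (\<lambda>h. (d *\<^sub>R a) \<bullet> h)) (at x)"
proof -
  have "(\<phi> has_derivative (*) d) (at (s x))"
    using assms(2) by (simp add: has_field_derivative_def)
  from has_derivative_compose[OF assms(1) this] show ?thesis by (simp add: inner_scaleR_left)
qed

lemma has_derivative_sphere_defining:
  "((\<lambda>x::real^'n. (x - y) \<bullet> (x - y) - R\<^sup>2) has_derivative (\<lambda>h. (2 *\<^sub>R (x - y)) \<bullet> h)) (at x)"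
proof -
  have "((\<lambda>x::real^'n. x - y) has_derivative (\<lambda>h. h)) (at x)"
    by (intro derivative_eq_intros) auto
  from has_derivative_diff[OF has_derivative_inner[OF this this] has_derivative_const[of "R\<^sup>2"]]
  show ?thesis by (simp add: inner_commute)
qed

text \<open>The exterior canonical solution is \<open>\<phi> (\<bar>x - y\<bar>\<^sup>2 - R\<^sup>2)\<close> with the profile
  \<open>\<phi> v = a (R / v)\<^sup>k\<close>; \<open>profile_d1\<close> and \<open>profile_d2\<close> are its first two derivatives.\<close>
definition profile :: "real \<Rightarrow> real \<Rightarrow> real \<Rightarrow> real \<Rightarrow> real" where
  "profile a R k v = a * (R / v) powr k"

definition profile_d1 :: "real \<Rightarrow> real \<Rightarrow> real \<Rightarrow> real \<Rightarrow> real" where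
  "profile_d1 a R k v = - a * k * R powr k * v powr (- k - 1)"

definition profile_d2 :: "real \<Rightarrow> real \<Rightarrow> real \<Rightarrow> real \<Rightarrow> real" where
  "profile_d2 a R k v = a * k * (k + 1) * R powr k * v powr (- k - 2)"

lemma profile_has_derivative:
  assumes "v > 0" "R > 0"
  shows "(profile a R k has_real_derivative profile_d1 a R k v) (at v)"
proof -
  have "((\<lambda>v. a * R powr k * v powr (- k)) has_real_derivative
          a * R powr k * (- k * v powr (- k - 1))) (at v)"
    using has_real_derivative_powr[OF assms(1), of "- k"] by (intro DERIV_cmult) simp
  moreover have "a * R powr k * v' powr (- k) = profile a R k v'" if "v' \<in> {0<..}" for v'
    using that assms by (simp add: profile_def powr_divide powr_minus field_simps)
  ultimately have "(profile a R k has_real_derivative a * R powr k * (- k * v powr (- k - 1))) (at v)"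
    using has_field_derivative_transform_within_open[OF _ open_greaterThan] assms by blast
  then show ?thesis by (simp add: profile_d1_def algebra_simps)
qed

lemma profile_d1_has_derivative:
  assumes "v > 0"
  shows "(profile_d1 a R k has_real_derivative profile_d2 a R k v) (at v)"
proof -
  have "((\<lambda>v. (- a * k * R powr k) * v powr (- k - 1)) has_real_derivative
          (- a * k * R powr k) * ((- k - 1) * v powr (- k - 1 - 1))) (at v)"
    using has_real_derivative_powr[OF assms, of "- k - 1"] by (intro DERIV_cmult) simp
  then show ?thesis unfolding profile_d1_def profile_d2_def by (simp add: algebra_simps)
qed

definition canonical_grad :: "real \<Rightarrow> real \<Rightarrow> real \<Rightarrow> real^'n \<Rightarrow> real^'n \<Rightarrow> real^'n" where
  "canonical_grad a R k y x = (2 * profile_d1 a R k ((x - y) \<bullet> (x - y) - R\<^sup>2)) *\<^sub>R (x - y)"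

definition canonical_hess :: "real \<Rightarrow> real \<Rightarrow> real \<Rightarrow> real^'n \<Rightarrow> real^'n \<Rightarrow> real^'n^'n" where
  "canonical_hess a R k y x =
     (2 * profile_d1 a R k ((x - y) \<bullet> (x - y) - R\<^sup>2)) *\<^sub>R mat 1
   + (4 * profile_d2 a R k ((x - y) \<bullet> (x - y) - R\<^sup>2)) *\<^sub>R (\<chi> i j. (x - y) $ i * (x - y) $ j)"

lemma canonical_hess_symmetric: "transpose (canonical_hess a R k y x) = canonical_hess a R k y x"
  by (simp add: canonical_hess_def vec_eq_iff transpose_def mat_def mult.commute)

lemma canonical_has_derivative:
  assumes "(x - y) \<bullet> (x - y) - R\<^sup>2 > 0" "R > 0"
  shows "((\<lambda>x. profile a R k ((x - y) \<bullet> (x - y) - R\<^sup>2)) has_derivative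
           (\<lambda>h. canonical_grad a R k y x \<bullet> h)) (at x)"
  using has_derivative_real_compose[OF has_derivative_sphere_defining profile_has_derivative[OF assms]]
  by (simp add: canonical_grad_def algebra_simps)

lemma canonical_grad_has_derivative:
  assumes "(x - y) \<bullet> (x - y) - R\<^sup>2 > 0"
  shows "(canonical_grad a R k y has_derivative (\<lambda>h. canonical_hess a R k y x *v h)) (at x)"
proof -
  let ?v = "(x - y) \<bullet> (x - y) - R\<^sup>2"
  have g: "((\<lambda>x. 2 * profile_d1 a R k ((x - y) \<bullet> (x - y) - R\<^sup>2)) has_derivative
             (\<lambda>h. ((2 * profile_d2 a R k ?v) *\<^sub>R (2 *\<^sub>R (x - y))) \<bullet> h)) (at x)"
    using has_derivative_real_compose[OF has_derivative_sphere_defining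
        DERIV_cmult[OF profile_d1_has_derivative[OF assms], of 2]] by simp
  have "((\<lambda>x. x - y) has_derivative (\<lambda>h. h)) (at x)"
    by (intro derivative_eq_intros) auto
  from has_derivative_scaleR[OF g this]
  have "(canonical_grad a R k y has_derivative (\<lambda>h. (2 * profile_d1 a R k ?v) *\<^sub>R h
           + (((2 * profile_d2 a R k ?v) *\<^sub>R (2 *\<^sub>R (x - y))) \<bullet> h) *\<^sub>R (x - y))) (at x)"
    unfolding canonical_grad_def[abs_def] by simp
  moreover have "(\<chi> i j. (x - y) $ i * (x - y) $ j) *v h = ((x - y) \<bullet> h) *\<^sub>R (x - y)" for h
    by (simp add: vec_eq_iff matrix_vector_mult_def inner_vec_def sum_distrib_left
        mult.commute mult.left_commute)
  then have "(2 * profile_d1 a R k ?v) *\<^sub>R h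
           + (((2 * profile_d2 a R k ?v) *\<^sub>R (2 *\<^sub>R (x - y))) \<bullet> h) *\<^sub>R (x - y)
           = canonical_hess a R k y x *v h" for h
    unfolding canonical_hess_def
    by (simp add: matrix_vector_mult_add_rdistrib scaleR_matrix_vector_assoc[symmetric]
        inner_scaleR_left)
  ultimately show ?thesis by simp
qed

text \<open>Symmetry of the Hessian is not part of \<open>classical_sol\<close>; for the canonical solutions it
  follows from this explicit computation.\<close>
lemma exterior_canonical_hessian:
  fixes u :: "real^'n \<Rightarrow> real"
  assumes R: "R > 0"
    and u: "\<And>x. u x = a * (R / ((norm (x - y))\<^sup>2 - R\<^sup>2)) powr k"
    and du: "\<forall>x\<in>- cball y R. (u has_derivative (\<lambda>h. Du x \<bullet> h)) (at x) \<and>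
                              (Du has_derivative (\<lambda>h. Hu x *v h)) (at x)"
    and z: "z \<in> - cball y R"
  shows "Hu z = canonical_hess a R k y z"
proof -
  have pos: "(x - y) \<bullet> (x - y) - R\<^sup>2 > 0" if "x \<in> - cball y R" for x
  proof -
    have "norm (x - y) > R" using that by (simp add: dist_norm norm_minus_commute)
    then have "(norm (x - y))\<^sup>2 > R\<^sup>2" using R by (simp add: power_strict_mono)
    then show ?thesis by (simp add: power2_norm_eq_inner)
  qed
  have u_profile: "u = (\<lambda>x. profile a R k ((x - y) \<bullet> (x - y) - R\<^sup>2))"
    by (rule ext) (simp add: u profile_def power2_norm_eq_inner)
  then have "Du x = canonical_grad a R k y x" if "x \<in> - cball y R" for x
    using has_derivative_unique[OF du[rule_format, OF that, THEN conjunct1]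
        canonical_has_derivative[OF pos[OF that] R, of a k, folded u_profile]]
    by (metis vector_eq_rdot)
  then have "(canonical_grad a R k y has_derivative (\<lambda>h. Hu z *v h)) (at z)"
    by (intro has_derivative_transform_within_open[OF du[rule_format, OF z, THEN conjunct2] _ z])
       (auto simp: open_Compl)
  from has_derivative_unique[OF this canonical_grad_has_derivative[OF pos[OF z]]]
  show ?thesis by (simp add: matrix_eq fun_eq_iff)
qed

section \<open>Comparison by scaling\<close>

lemma lsc_scaled_margin:
  fixes w :: "real^'n \<Rightarrow> ereal"
  assumes "open \<Omega>" "lsc_on \<Omega> w" "continuous_on \<Omega> u"
    and p: "p \<in> \<Omega>" "u p > 0" "ereal (t * u p) < w p"
  shows "\<exists>\<tau>>t. eventually (\<lambda>x. ereal (\<tau> * u x) < w x) (nhds p)"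
proof -
  obtain q where q: "t * u p < q" "ereal q < w p" using ereal_dense2[OF p(3)] by auto
  define \<tau> where "\<tau> = (t * u p + q) / 2 / u p"
  have \<tau>u: "\<tau> * u p = (t * u p + q) / 2" using p(2) by (simp add: \<tau>_def)
  then have "t * u p < \<tau> * u p" "\<tau> * u p < q" using q(1) by simp_all
  then have \<tau>: "\<tau> * u p < q" "\<tau> > t" using p(2) by (simp_all add: mult_less_cancel_right)
  have "ereal q < Liminf (at p) w" using q(2) assms(2) p(1) unfolding lsc_on_def
    by (blast intro: order.strict_trans2)
  then have "eventually (\<lambda>x. ereal q < w x) (at p)" by (rule less_LiminfD)
  moreover have "isCont u p" using assms(1,3) p(1) by (simp add: continuous_on_eq_continuous_at)
  then have "((\<lambda>x. \<tau> * u x) \<longlongrightarrow> \<tau> * u p) (at p)"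
    by (intro tendsto_mult tendsto_const) (simp add: isCont_def)
  then have "eventually (\<lambda>x. \<tau> * u x < q) (at p)" using \<tau>(1) by (rule order_tendstoD(2))
  ultimately have "eventually (\<lambda>x. ereal (\<tau> * u x) < w x) (at p)"
    by eventually_elim (rule less_trans[of _ "ereal q"], simp_all)
  then have "eventually (\<lambda>x. x \<noteq> p \<longrightarrow> x \<in> UNIV \<longrightarrow> ereal (\<tau> * u x) < w x) (nhds p)"
    unfolding eventually_at_filter .
  moreover have "ereal (\<tau> * u p) < ereal q" using \<tau>(1) by simp
  then have "ereal (\<tau> * u p) < w p" using q(2) by (rule less_trans)
  ultimately have "eventually (\<lambda>x. ereal (\<tau> * u x) < w x) (nhds p)"
    by (elim eventually_mono) auto
  with \<tau>(2) show ?thesis by blast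
qed

lemma boundary_scaled_margin:
  fixes w :: "real^'n \<Rightarrow> ereal"
  assumes "open \<Omega>" "p \<in> frontier \<Omega>" "Liminf (at p within \<Omega>) w \<ge> ereal c" "c > 0"
    and u: "\<forall>x\<in>\<Omega>. 0 < u x \<and> u x \<le> c" and t: "0 \<le> t" "t < 1"
  shows "\<exists>\<tau>>t. eventually (\<lambda>x. x \<in> \<Omega> \<longrightarrow> ereal (\<tau> * u x) < w x) (nhds p)"
proof -
  define \<tau> where "\<tau> = (t + 1) / 2"
  have \<tau>: "t < \<tau>" "\<tau> < 1" using t by (simp_all add: \<tau>_def)
  have "ereal (\<tau> * c) < ereal c" using \<tau> assms(4) by simp
  then have "ereal (\<tau> * c) < Liminf (at p within \<Omega>) w" using assms(3) by (rule order.strict_trans2)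
  then have "eventually (\<lambda>x. ereal (\<tau> * c) < w x) (at p within \<Omega>)" by (rule less_LiminfD)
  then have "eventually (\<lambda>x. x \<noteq> p \<longrightarrow> x \<in> \<Omega> \<longrightarrow> ereal (\<tau> * c) < w x) (nhds p)"
    unfolding eventually_at_filter .
  moreover have "p \<notin> \<Omega>" using assms(1,2) by (simp add: frontier_def interior_open)
  moreover have "\<tau> * u x \<le> \<tau> * c" if "x \<in> \<Omega>" for x
    using u that \<tau> t by (simp add: mult_left_mono)
  ultimately have "eventually (\<lambda>x. x \<in> \<Omega> \<longrightarrow> ereal (\<tau> * u x) < w x) (nhds p)"
    by (elim eventually_mono) (metis ereal_less_eq(3) order.strict_trans1)
  with \<tau>(1) show ?thesis by blast
qed

lemma scaled_margin_on_closure: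
  fixes w :: "real^'n \<Rightarrow> ereal"
  assumes \<Omega>: "open \<Omega>" and lsc: "lsc_on \<Omega> w"
    and bdry: "\<forall>\<xi>\<in>frontier \<Omega>. Liminf (at \<xi> within \<Omega>) w \<ge> ereal c" and "c > 0"
    and u_cont: "continuous_on \<Omega> u" and u: "\<forall>x\<in>\<Omega>. 0 < u x \<and> u x \<le> c"
    and t0: "0 \<le> t0" "t0 < 1" and strict: "\<forall>x\<in>\<Omega>. ereal (t0 * u x) < w x"
    and p: "p \<in> closure \<Omega>"
  shows "\<exists>\<tau>>t0. \<exists>N. open N \<and> p \<in> N \<and> (\<forall>x\<in>N \<inter> \<Omega>. ereal (\<tau> * u x) < w x)"
proof (cases "p \<in> \<Omega>")
  case True
  then obtain \<tau> where "\<tau> > t0" "eventually (\<lambda>x. ereal (\<tau> * u x) < w x) (nhds p)"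
    using lsc_scaled_margin[OF \<Omega> lsc u_cont True _ strict[rule_format, OF True]] u by blast
  then show ?thesis unfolding eventually_nhds by blast
next
  case False
  then have "p \<in> frontier \<Omega>" using p \<Omega> by (simp add: frontier_def interior_open)
  then obtain \<tau> where "\<tau> > t0" "eventually (\<lambda>x. x \<in> \<Omega> \<longrightarrow> ereal (\<tau> * u x) < w x) (nhds p)"
    using boundary_scaled_margin[OF \<Omega> _ _ \<open>c > 0\<close> u t0] bdry by blast
  then show ?thesis unfolding eventually_nhds by blast
qed

lemma uniform_scaled_margin:
  fixes w :: "'a::topological_space \<Rightarrow> ereal"
  assumes "compact K" "\<Omega> \<subseteq> K" "t0 < 1" "\<forall>x\<in>\<Omega>. u x > 0"
    and margin: "\<And>p. p \<in> K \<Longrightarrow>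
      \<exists>\<tau>>t0. \<exists>N. open N \<and> p \<in> N \<and> (\<forall>x\<in>N \<inter> \<Omega>. ereal (\<tau> * u x) < w x)"
  shows "\<exists>\<tau>>t0. \<tau> \<le> 1 \<and> (\<forall>x\<in>\<Omega>. ereal (\<tau> * u x) \<le> w x)"
proof -
  obtain \<tau> N where \<tau>N: "\<And>p. p \<in> K \<Longrightarrow>
      \<tau> p > t0 \<and> open (N p) \<and> p \<in> N p \<and> (\<forall>x\<in>N p \<inter> \<Omega>. ereal (\<tau> p * u x) < w x)"
    using margin by metis
  have "K \<subseteq> (\<Union>p\<in>K. N p)" using \<tau>N by blast
  then obtain F where F: "F \<subseteq> K" "finite F" "K \<subseteq> (\<Union>p\<in>F. N p)"
    using compactE_image[of K K N] \<tau>N assms(1) by metis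
  define \<tau>1 where "\<tau>1 = Min (insert 1 (\<tau> ` F))"
  have "\<forall>a\<in>insert 1 (\<tau> ` F). t0 < a" using F(1) \<tau>N assms(3) by blast
  then have "\<tau>1 > t0" unfolding \<tau>1_def using F(2) by (subst Min_gr_iff) simp_all
  moreover have "\<tau>1 \<le> 1" unfolding \<tau>1_def using F(2) by (intro Min_le) auto
  moreover have "ereal (\<tau>1 * u x) \<le> w x" if x: "x \<in> \<Omega>" for x
  proof -
    obtain p where p: "p \<in> F" "x \<in> N p" using F(3) x assms(2) by blast
    have "\<tau>1 \<le> \<tau> p" unfolding \<tau>1_def using F(2) p(1) by (intro Min_le) auto
    then have "\<tau>1 * u x \<le> \<tau> p * u x" using assms(4) x by (simp add: mult_right_mono)
    moreover have "ereal (\<tau> p * u x) < w x" using \<tau>N p F(1) x by blast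
    ultimately show ?thesis by (metis ereal_less_eq(3) less_imp_le order_trans)
  qed
  ultimately show ?thesis by blast
qed

text \<open>Comparison by sliding: let \<open>t\<^sub>0\<close> be the largest \<open>t \<le> 1\<close> with \<open>t u \<le> w\<close> on \<open>\<Omega>\<close>.
  If \<open>t\<^sub>0 < 1\<close>, the inequality is strict at every point of \<open>\<Omega>\<close> (no touching) and, with room to
  spare, near the boundary; compactness of the closure then allows to increase \<open>t\<^sub>0\<close>.\<close>
lemma comparison_by_scaling:
  fixes w :: "real^'n \<Rightarrow> ereal" and u :: "real^'n \<Rightarrow> real"
  assumes \<Omega>: "open \<Omega>" "bounded \<Omega>" and lsc: "lsc_on \<Omega> w" and w_pos: "\<forall>x\<in>\<Omega>. w x > 0"
    and bdry: "\<forall>\<xi>\<in>frontier \<Omega>. Liminf (at \<xi> within \<Omega>) w \<ge> ereal c" and "c > 0"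
    and u_cont: "continuous_on \<Omega> u" and u: "\<forall>x\<in>\<Omega>. 0 < u x \<and> u x \<le> c"
    and no_touch: "\<And>t z. 0 < t \<Longrightarrow> t < 1 \<Longrightarrow> z \<in> \<Omega> \<Longrightarrow> w z = ereal (t * u z) \<Longrightarrow>
                          \<forall>x\<in>\<Omega>. ereal (t * u x) \<le> w x \<Longrightarrow> False"
  shows "\<forall>x\<in>\<Omega>. ereal (u x) \<le> w x"
proof (rule ccontr)
  assume not_below: "\<not> ?thesis"
  define T where "T = {t. 0 \<le> t \<and> t \<le> 1 \<and> (\<forall>x\<in>\<Omega>. ereal (t * u x) \<le> w x)}"
  define t0 where "t0 = Sup T"
  have T0: "0 \<in> T" unfolding T_def using w_pos by (auto simp: zero_ereal_def[symmetric] less_imp_le)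
  have bdd: "bdd_above T" unfolding T_def by (auto intro: bdd_aboveI[of _ 1])
  have t0: "0 \<le> t0" "t0 \<le> 1" unfolding t0_def
  proof (rule cSup_upper[OF T0 bdd], rule cSup_least)
    show "T \<noteq> {}" using T0 by blast
  qed (simp add: T_def)
  have t0_below: "ereal (t0 * u x) \<le> w x" if x: "x \<in> \<Omega>" for x
  proof (cases "w x")
    case (real r)
    have "t0 \<le> r / u x" unfolding t0_def
    proof (rule cSup_least)
      show "T \<noteq> {}" using T0 by blast
    next
      fix t assume "t \<in> T"
      then have "t * u x \<le> r" using x real unfolding T_def by auto
      then show "t \<le> r / u x" using x u by (simp add: pos_le_divide_eq)
    qed
    then show ?thesis using real u x by (simp add: pos_le_divide_eq)
  qed (use w_pos x in auto)
  have "t0 \<noteq> 1"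
  proof
    assume "t0 = 1"
    then show False using not_below t0_below by simp
  qed
  then have "t0 < 1" using t0(2) by simp
  have strict: "ereal (t0 * u x) < w x" if "x \<in> \<Omega>" for x
  proof (rule ccontr)
    assume "\<not> ?thesis"
    then have touch: "w x = ereal (t0 * u x)" using t0_below[OF that] by simp
    have "t0 \<noteq> 0"
    proof
      assume "t0 = 0"
      then have "w x = 0" using touch by (simp add: zero_ereal_def)
      then show False using w_pos that by (metis less_irrefl)
    qed
    then have "t0 > 0" using t0(1) by simp
    then show False using no_touch[OF _ \<open>t0 < 1\<close> that touch] t0_below by blast
  qed
  have margin: "\<exists>\<tau>>t0. \<exists>N. open N \<and> p \<in> N \<and> (\<forall>x\<in>N \<inter> \<Omega>. ereal (\<tau> * u x) < w x)"
    if "p \<in> closure \<Omega>" for p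
    using scaled_margin_on_closure[OF \<Omega>(1) lsc bdry \<open>c > 0\<close> u_cont u t0(1) \<open>t0 < 1\<close> _ that] strict
    by blast
  have "compact (closure \<Omega>)" using \<Omega>(2) by (simp add: compact_closure)
  moreover have "\<forall>x\<in>\<Omega>. u x > 0" using u by blast
  ultimately obtain \<tau> where "\<tau> > t0" "\<tau> \<le> 1" "\<forall>x\<in>\<Omega>. ereal (\<tau> * u x) \<le> w x"
    using uniform_scaled_margin[OF _ closure_subset \<open>t0 < 1\<close> _ margin] by blast
  then have "\<tau> \<in> T" using t0(1) by (simp add: T_def)
  then have "\<tau> \<le> t0" unfolding t0_def using bdd by (rule cSup_upper)
  with \<open>\<tau> > t0\<close> show False by simp
qed

section \<open>Uniform exterior sphere condition\<close>

definition exterior_ball :: "'a::metric_space set \<Rightarrow> real \<Rightarrow> 'a \<Rightarrow> bool" where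
  "exterior_ball \<Omega> r \<xi> \<longleftrightarrow> (\<exists>y. dist y \<xi> = r \<and> ball y r \<inter> \<Omega> = {})"

lemma exterior_ball_shrink:
  fixes \<xi> :: "'a::real_normed_vector"
  assumes "exterior_ball \<Omega> R \<xi>" "0 < r" "r \<le> R"
  shows "exterior_ball \<Omega> r \<xi>"
proof -
  obtain y where y: "dist y \<xi> = R" "ball y R \<inter> \<Omega> = {}"
    using assms(1) unfolding exterior_ball_def by blast
  define y' where "y' = \<xi> + (r / R) *\<^sub>R (y - \<xi>)"
  have R: "R > 0" using assms by simp
  have "dist y' \<xi> = r" using y(1) assms R by (simp add: y'_def dist_norm)
  moreover have "dist y y' = R - r"
  proof -
    have "y - y' = (1 - r / R) *\<^sub>R (y - \<xi>)" by (simp add: y'_def algebra_simps)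
    then have "dist y y' = (1 - r / R) * R" using y(1) assms R by (simp add: dist_norm)
    then show ?thesis using R by (simp add: left_diff_distrib)
  qed
  then have "ball y' r \<subseteq> ball y R"
  proof (intro subsetI)
    fix z assume "z \<in> ball y' r"
    then show "z \<in> ball y R" using dist_triangle[of y z y'] \<open>dist y y' = R - r\<close> by simp
  qed
  ultimately show ?thesis using y(2) unfolding exterior_ball_def by blast
qed

lemma onorm_inner_le: "onorm (\<lambda>h. (a::'a::euclidean_space) \<bullet> h) \<le> norm a"
  by (rule onorm_le) (simp add: Cauchy_Schwarz_ineq2)

lemma gradient_lipschitz_on_compact_convex:
  fixes Dg :: "real^'n \<Rightarrow> real^'n" and H :: "'n \<Rightarrow> real^'n \<Rightarrow> real^'n"
  assumes K: "compact K" "convex K"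
    and d2: "\<And>i x. x \<in> K \<Longrightarrow> ((\<lambda>x. Dg x $ i) has_derivative (\<lambda>h. H i x \<bullet> h)) (at x within K)"
    and c2: "\<And>i j. continuous_on K (\<lambda>x. H i x $ j)"
  shows "\<exists>L>0. \<forall>x\<in>K. \<forall>x'\<in>K. norm (Dg x - Dg x') \<le> L * norm (x - x')"
proof -
  have "\<exists>b>0. \<forall>x\<in>K. \<bar>H i x $ j\<bar> \<le> b" for i j
    using compact_imp_bounded[OF compact_continuous_image[OF c2 K(1)]] unfolding bounded_pos by auto
  then obtain B where B: "\<And>i j. B i j > 0" "\<And>i j x. x \<in> K \<Longrightarrow> \<bar>H i x $ j\<bar> \<le> B i j"
    by metis
  have comp: "\<bar>Dg x $ i - Dg x' $ i\<bar> \<le> (\<Sum>j\<in>UNIV. B i j) * norm (x - x')"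
    if x: "x \<in> K" "x' \<in> K" for x x' i
  proof -
    have "norm (Dg x $ i - Dg x' $ i) \<le> (\<Sum>j\<in>UNIV. B i j) * norm (x - x')"
    proof (rule differentiable_bound[OF K(2) _ _ x, where f = "\<lambda>x. Dg x $ i"])
      fix z assume z: "z \<in> K"
      show "((\<lambda>x. Dg x $ i) has_derivative (\<lambda>h. H i z \<bullet> h)) (at z within K)" using d2 z .
      have "onorm (\<lambda>h. H i z \<bullet> h) \<le> (\<Sum>j\<in>UNIV. \<bar>H i z $ j\<bar>)"
        using onorm_inner_le norm_le_l1_cart order_trans by blast
      also have "\<dots> \<le> (\<Sum>j\<in>UNIV. B i j)" using B(2) z by (intro sum_mono) auto
      finally show "onorm (\<lambda>h. H i z \<bullet> h) \<le> (\<Sum>j\<in>UNIV. B i j)" .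
    qed
    then show ?thesis by simp
  qed
  define L where "L = (\<Sum>i\<in>UNIV. \<Sum>j\<in>UNIV. B i j) + 1"
  have "L > 0" unfolding L_def using B(1) by (simp add: sum_nonneg less_imp_le add_nonneg_pos)
  moreover have "norm (Dg x - Dg x') \<le> L * norm (x - x')" if "x \<in> K" "x' \<in> K" for x x'
  proof -
    have "norm (Dg x - Dg x') \<le> (\<Sum>i\<in>UNIV. \<bar>(Dg x - Dg x') $ i\<bar>)" by (rule norm_le_l1_cart)
    also have "\<dots> \<le> (\<Sum>i\<in>UNIV. (\<Sum>j\<in>UNIV. B i j) * norm (x - x'))"
      using comp[OF that] by (intro sum_mono) simp
    also have "\<dots> = (\<Sum>i\<in>UNIV. \<Sum>j\<in>UNIV. B i j) * norm (x - x')" by (simp add: sum_distrib_right)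
    also have "\<dots> \<le> L * norm (x - x')" unfolding L_def by (simp add: mult_right_mono)
    finally show ?thesis .
  qed
  ultimately show ?thesis by blast
qed

lemma Ck2_gradient_lipschitz:
  fixes \<rho> :: "real^'n \<Rightarrow> real"
  assumes U: "open U" "\<xi> \<in> U" and C2: "Ck (Suc (Suc 0)) U \<rho>"
  shows "\<exists>Dg. (\<forall>x\<in>U. (\<rho> has_derivative (\<lambda>h. Dg x \<bullet> h)) (at x)) \<and>
    (\<exists>\<delta>>0. \<exists>L>0. cball \<xi> \<delta> \<subseteq> U \<and>
       (\<forall>x\<in>cball \<xi> \<delta>. \<forall>x'\<in>cball \<xi> \<delta>. norm (Dg x - Dg x') \<le> L * norm (x - x')))"
proof -
  obtain Dg where d1: "\<forall>x\<in>U. (\<rho> has_derivative (\<lambda>h. Dg x \<bullet> h)) (at x)"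
    and "\<forall>i. \<exists>D2. (\<forall>x\<in>U. ((\<lambda>x. Dg x $ i) has_derivative (\<lambda>h. D2 x \<bullet> h)) (at x)) \<and>
                   (\<forall>j. continuous_on U (\<lambda>x. D2 x $ j))"
    using C2 by auto
  then obtain D2 where d2: "\<And>i x. x \<in> U \<Longrightarrow> ((\<lambda>x. Dg x $ i) has_derivative (\<lambda>h. D2 i x \<bullet> h)) (at x)"
    and c2: "\<And>i j. continuous_on U (\<lambda>x. D2 i x $ j)" by metis
  obtain \<delta> where \<delta>: "\<delta> > 0" "cball \<xi> \<delta> \<subseteq> U" using U open_contains_cball by blast
  have "\<exists>L>0. \<forall>x\<in>cball \<xi> \<delta>. \<forall>x'\<in>cball \<xi> \<delta>. norm (Dg x - Dg x') \<le> L * norm (x - x')"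
  proof (rule gradient_lipschitz_on_compact_convex[where H = D2])
    fix i x assume "x \<in> cball \<xi> \<delta>"
    then show "((\<lambda>x. Dg x $ i) has_derivative (\<lambda>h. D2 i x \<bullet> h)) (at x within cball \<xi> \<delta>)"
      using d2 \<delta>(2) has_derivative_at_withinI by blast
  qed (use continuous_on_subset[OF c2 \<delta>(2)] in auto)
  then show ?thesis using d1 \<delta> by blast
qed

text \<open>With a Lipschitz gradient, \<open>\<rho> (\<xi> + v) \<ge> g \<bullet> v - L \<bar>v\<bar>\<^sup>2\<close>, and on the ball of radius \<open>r\<close>
  touching \<open>\<xi>\<close> in the direction of \<open>g = \<nabla>\<rho>(\<xi>)\<close> one has \<open>\<bar>v\<bar>\<^sup>2 < 2 r (g \<bullet> v) / \<bar>g\<bar>\<close>.\<close>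
lemma pos_on_ball_along_gradient:
  fixes \<rho> :: "real^'n \<Rightarrow> real"
  assumes K: "convex K" and d: "\<forall>x\<in>K. (\<rho> has_derivative (\<lambda>h. Dg x \<bullet> h)) (at x)"
    and lip: "\<forall>x\<in>K. \<forall>x'\<in>K. norm (Dg x - Dg x') \<le> L * norm (x - x')" and L: "L > 0"
    and \<xi>: "\<xi> \<in> K" "\<rho> \<xi> = 0" "Dg \<xi> \<noteq> 0" and r: "2 * L * r \<le> norm (Dg \<xi>)"
    and z: "z \<in> K" "z \<in> ball (\<xi> + (r / norm (Dg \<xi>)) *\<^sub>R Dg \<xi>) r"
  shows "\<rho> z > 0"
proof -
  define g where "g = Dg \<xi>"
  define v where "v = z - \<xi>"
  have seg: "closed_segment \<xi> z \<subseteq> K" by (rule closed_segment_subset[OF \<xi>(1) z(1) K])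
  have "norm (\<rho> z - \<rho> \<xi> - (\<lambda>h. Dg \<xi> \<bullet> h) (z - \<xi>)) \<le> norm (z - \<xi>) * (L * norm (z - \<xi>))"
  proof (rule differentiable_bound_linearization[where S = "closed_segment \<xi> z" and f' = "\<lambda>x h. Dg x \<bullet> h"])
    fix t :: real assume "t \<in> {0..1}"
    then show "\<xi> + t *\<^sub>R (z - \<xi>) \<in> closed_segment \<xi> z"
      unfolding in_segment by (intro exI[of _ t]) (auto simp: algebra_simps)
  next
    fix x assume x: "x \<in> closed_segment \<xi> z"
    then show "(\<rho> has_derivative (\<lambda>h. Dg x \<bullet> h)) (at x within closed_segment \<xi> z)"
      using d seg has_derivative_at_withinI by blast
    have "onorm ((\<lambda>h. Dg x \<bullet> h) - (\<lambda>h. Dg \<xi> \<bullet> h)) = onorm (\<lambda>h. (Dg x - Dg \<xi>) \<bullet> h)"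
      by (simp add: fun_diff_def inner_diff_left)
    also have "\<dots> \<le> norm (Dg x - Dg \<xi>)" by (rule onorm_inner_le)
    also have "\<dots> \<le> L * norm (x - \<xi>)" using lip x seg \<xi>(1) by blast
    also have "\<dots> \<le> L * norm (z - \<xi>)" using segment_bound1[OF x] L by simp
    finally show "onorm ((\<lambda>h. Dg x \<bullet> h) - (\<lambda>h. Dg \<xi> \<bullet> h)) \<le> L * norm (z - \<xi>)" .
  qed simp
  then have taylor: "\<rho> z \<ge> g \<bullet> v - L * (norm v)\<^sup>2"
    using \<xi>(2) unfolding g_def v_def by (simp add: power2_eq_square abs_le_iff algebra_simps)
  define s where "s = r / norm g"
  have g: "norm g > 0" using \<xi>(3) by (simp add: g_def)
  have "r > 0" using z(2) by (metis mem_ball zero_le_dist order_le_less_trans)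
  then have "s > 0" using g by (simp add: s_def)
  have "(norm (v - s *\<^sub>R g))\<^sup>2 < r\<^sup>2"
    using z(2) by (intro power_strict_mono) (auto simp: v_def s_def g_def dist_norm norm_minus_commute algebra_simps)
  moreover have "(norm (v - s *\<^sub>R g))\<^sup>2 = (norm v)\<^sup>2 - 2 * s * (g \<bullet> v) + s\<^sup>2 * (norm g)\<^sup>2"
    unfolding power2_norm_eq_inner
    by (simp add: inner_diff_left inner_diff_right inner_commute algebra_simps power2_eq_square)
  moreover have "s\<^sup>2 * (norm g)\<^sup>2 = r\<^sup>2" using g by (simp add: s_def power_divide)
  ultimately have ball: "(norm v)\<^sup>2 < 2 * s * (g \<bullet> v)" by simp
  then have "0 < 2 * s * (g \<bullet> v)" using zero_le_power2[of "norm v"] by linarith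
  then have "g \<bullet> v > 0" using \<open>s > 0\<close> by (simp add: zero_less_mult_iff)
  then have "2 * L * s * (g \<bullet> v) \<le> g \<bullet> v"
    using r g by (simp add: s_def g_def field_simps mult_right_mono)
  moreover have "L * (norm v)\<^sup>2 < L * (2 * s * (g \<bullet> v))" using ball L by simp
  ultimately show ?thesis using taylor by simp
qed

lemma local_exterior_balls:
  fixes \<rho> :: "real^'n \<Rightarrow> real"
  assumes d: "\<forall>x\<in>cball \<xi> \<delta>0. (\<rho> has_derivative (\<lambda>h. Dg x \<bullet> h)) (at x)" and "\<delta>0 > 0"
    and lip: "\<forall>x\<in>cball \<xi> \<delta>0. \<forall>x'\<in>cball \<xi> \<delta>0. norm (Dg x - Dg x') \<le> L * norm (x - x')"
    and L: "L > 0" and nz: "Dg \<xi> \<noteq> 0"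
    and \<Omega>: "\<forall>x\<in>cball \<xi> \<delta>0. x \<in> \<Omega> \<longrightarrow> \<rho> x < 0" "\<forall>x\<in>cball \<xi> \<delta>0. x \<in> frontier \<Omega> \<longrightarrow> \<rho> x = 0"
  shows "\<exists>\<delta>>0. \<exists>r>0. \<forall>\<xi>'\<in>frontier \<Omega> \<inter> ball \<xi> \<delta>. exterior_ball \<Omega> r \<xi>'"
proof -
  define m where "m = norm (Dg \<xi>) / 2"
  define \<delta> where "\<delta> = min \<delta>0 (m / L)"
  define r where "r = min (\<delta> / 4) (m / (2 * L))"
  have m: "m > 0" using nz by (simp add: m_def)
  then have "\<delta> > 0" using \<open>\<delta>0 > 0\<close> L by (simp add: \<delta>_def)
  moreover have "2 * L * r \<le> 2 * L * (m / (2 * L))" using L by (intro mult_left_mono) (auto simp: r_def)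
  ultimately have r: "r > 0" "r \<le> \<delta> / 4" "2 * L * r \<le> m" using m L by (simp_all add: r_def)
  have "exterior_ball \<Omega> r \<xi>'" if \<xi>': "\<xi>' \<in> frontier \<Omega>" "dist \<xi> \<xi>' < \<delta> / 2" for \<xi>'
  proof -
    have \<xi>'K: "\<xi>' \<in> cball \<xi> \<delta>0" using \<xi>'(2) \<open>\<delta> > 0\<close> by (simp add: \<delta>_def)
    have "norm (Dg \<xi> - Dg \<xi>') \<le> L * norm (\<xi> - \<xi>')" using lip \<xi>'K \<open>\<delta>0 > 0\<close> by simp
    also have "\<dots> \<le> L * (\<delta> / 2)" using \<xi>'(2) L by (simp add: dist_norm)
    also have "\<dots> \<le> m" using L m by (simp add: \<delta>_def field_simps min_def)
    finally have "norm (Dg \<xi>') \<ge> m" using norm_triangle_ineq2[of "Dg \<xi>" "Dg \<xi>'"]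
      unfolding m_def by linarith
    then have g: "Dg \<xi>' \<noteq> 0" "2 * L * r \<le> norm (Dg \<xi>')" using m r(3) by auto
    define y where "y = \<xi>' + (r / norm (Dg \<xi>')) *\<^sub>R Dg \<xi>'"
    have "dist y \<xi>' = r" using g(1) r(1) by (simp add: y_def dist_norm)
    moreover have "ball y r \<inter> \<Omega> = {}"
    proof (intro equals0I)
      fix z assume z: "z \<in> ball y r \<inter> \<Omega>"
      have "dist \<xi> z \<le> dist \<xi> \<xi>' + dist \<xi>' y + dist y z"
        using dist_triangle[of \<xi> z \<xi>'] dist_triangle[of \<xi>' z y] by linarith
      then have zK: "z \<in> cball \<xi> \<delta>0"
        using z \<xi>'(2) r(2) \<open>dist y \<xi>' = r\<close> by (simp add: dist_commute \<delta>_def)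
      have "\<rho> z > 0"
        by (rule pos_on_ball_along_gradient[OF convex_cball d lip L \<xi>'K _ g])
           (use \<Omega>(2) \<xi>' \<xi>'K zK z in \<open>auto simp: y_def\<close>)
      then show False using \<Omega>(1) zK z by force
    qed
    ultimately show ?thesis unfolding exterior_ball_def by blast
  qed
  then show ?thesis using \<open>\<delta> > 0\<close> r(1) by (intro exI[of _ "\<delta> / 2"]) auto
qed

lemma smooth_bdd_domain_local_exterior_balls:
  fixes \<Omega> :: "(real^'n) set"
  assumes "smooth_bdd_domain \<Omega>" "\<xi> \<in> frontier \<Omega>"
  shows "\<exists>\<delta>>0. \<exists>r>0. \<forall>\<xi>'\<in>frontier \<Omega> \<inter> ball \<xi> \<delta>. exterior_ball \<Omega> r \<xi>'"
proof -
  obtain U \<rho> where U: "open U" "\<xi> \<in> U" and ck: "\<forall>k. Ck k U \<rho>"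
    and grad: "\<forall>x\<in>U. \<exists>g. (\<rho> has_derivative (\<lambda>h. g \<bullet> h)) (at x) \<and> g \<noteq> 0"
    and UO: "U \<inter> \<Omega> = {x\<in>U. \<rho> x < 0}" and UF: "U \<inter> frontier \<Omega> = {x\<in>U. \<rho> x = 0}"
    using assms unfolding smooth_bdd_domain_def by blast
  obtain Dg \<delta>0 L where d: "\<forall>x\<in>U. (\<rho> has_derivative (\<lambda>h. Dg x \<bullet> h)) (at x)"
    and \<delta>0: "\<delta>0 > 0" "cball \<xi> \<delta>0 \<subseteq> U" and "L > 0"
    and lip: "\<forall>x\<in>cball \<xi> \<delta>0. \<forall>x'\<in>cball \<xi> \<delta>0. norm (Dg x - Dg x') \<le> L * norm (x - x')"
    using Ck2_gradient_lipschitz[OF U] ck by blast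
  obtain g where g: "(\<rho> has_derivative (\<lambda>h. g \<bullet> h)) (at \<xi>)" "g \<noteq> 0" using grad U(2) by blast
  have "Dg \<xi> = g" using has_derivative_unique[OF d[rule_format, OF U(2)] g(1)] by (metis vector_eq_rdot)
  then show ?thesis
    using local_exterior_balls[OF _ \<delta>0(1) lip \<open>L > 0\<close>] d \<delta>0(2) g(2) UO UF by blast
qed

lemma smooth_bdd_domain_uniform_exterior_ball:
  fixes \<Omega> :: "(real^'n) set"
  assumes "smooth_bdd_domain \<Omega>"
  shows "\<exists>r>0. \<forall>\<xi>\<in>frontier \<Omega>. exterior_ball \<Omega> r \<xi>"
proof -
  obtain \<delta> R where \<delta>R: "\<And>\<xi>. \<xi> \<in> frontier \<Omega> \<Longrightarrow>
      \<delta> \<xi> > 0 \<and> R \<xi> > 0 \<and> (\<forall>\<xi>'\<in>frontier \<Omega> \<inter> ball \<xi> (\<delta> \<xi>). exterior_ball \<Omega> (R \<xi>) \<xi>')"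
    using smooth_bdd_domain_local_exterior_balls[OF assms] by metis
  have "compact (frontier \<Omega>)"
    using assms unfolding smooth_bdd_domain_def by (simp add: compact_frontier_bounded)
  moreover have "frontier \<Omega> \<subseteq> (\<Union>\<xi>\<in>frontier \<Omega>. ball \<xi> (\<delta> \<xi>))" using \<delta>R by force
  ultimately obtain K where K: "K \<subseteq> frontier \<Omega>" "finite K" "frontier \<Omega> \<subseteq> (\<Union>\<xi>\<in>K. ball \<xi> (\<delta> \<xi>))"
    using compactE_image[of "frontier \<Omega>" "frontier \<Omega>" "\<lambda>\<xi>. ball \<xi> (\<delta> \<xi>)"] by blast
  define r where "r = Min (insert 1 (R ` K))"
  have "\<forall>a\<in>insert 1 (R ` K). 0 < a" using K(1) \<delta>R by force
  then have r: "r > 0" unfolding r_def using K(2) by (subst Min_gr_iff) simp_all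
  have "exterior_ball \<Omega> r \<xi>'" if \<xi>': "\<xi>' \<in> frontier \<Omega>" for \<xi>'
  proof -
    obtain \<xi> where \<xi>: "\<xi> \<in> K" "\<xi>' \<in> ball \<xi> (\<delta> \<xi>)" using K(3) \<xi>' by blast
    then have "exterior_ball \<Omega> (R \<xi>) \<xi>'" using \<delta>R K(1) \<xi>' by blast
    moreover have "r \<le> R \<xi>" unfolding r_def using K(2) \<xi>(1) by (intro Min_le) auto
    ultimately show ?thesis using exterior_ball_shrink r by blast
  qed
  then show ?thesis using r by blast
qed

text \<open>\<open>e\<close> is chosen so that the exterior canonical solution with radius \<open>R\<close>,
  \<open>r\<^sup>2 - R\<^sup>2 = e R\<close>, equals \<open>c\<close> on the sphere of radius \<open>r\<close>; \<open>c \<ge> c0\<close> amounts to \<open>e \<le> r\<close>.\<close>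
lemma boundary_constant_facts:
  fixes N \<alpha> r c c0 :: real
  assumes N: "N \<ge> 3" and a: "\<alpha> > 0" and r: "r > 0" and c0: "c0 = \<alpha> * r powr (- (N - 2) / 2)"
    and cc: "c \<ge> c0"
  defines "e \<equiv> \<alpha> powr (2 / (N - 2)) * c powr (- 2 / (N - 2))"
  shows "c0 > 0" "c > 0" "e > 0" "e \<le> r" "\<alpha> powr (- 2 / (N - 2)) * c0 powr (2 / (N - 2)) = 1 / r"
    "\<alpha> * e powr (- ((N - 2) / 2)) = c"
proof -
  show c0p: "c0 > 0" using a r c0 by simp
  then show cp: "c > 0" using cc by simp
  show "e > 0" using a cp by (simp add: e_def)
  have N2: "N - 2 > 0" using N by simp
  have exps: "(- (N - 2) / 2) * (- 2 / (N - 2)) = 1" "(- (N - 2) / 2) * (2 / (N - 2)) = -1"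
    "(2 / (N - 2)) * (- ((N - 2) / 2)) = -1" "(- 2 / (N - 2)) * (- ((N - 2) / 2)) = 1"
    using N2 by (simp_all add: field_simps)
  have "e \<le> \<alpha> powr (2 / (N - 2)) * c0 powr (- 2 / (N - 2))" unfolding e_def
    using powr_mono2'[of "- 2 / (N - 2)" c0 c] N2 c0p cc a by (simp add: mult_left_mono)
  also have "\<dots> = r"
  proof -
    have "c0 powr (- 2 / (N - 2)) = \<alpha> powr (- 2 / (N - 2)) * (r powr (- (N - 2) / 2)) powr (- 2 / (N - 2))"
      using a r by (simp add: c0 powr_mult)
    also have "(r powr (- (N - 2) / 2)) powr (- 2 / (N - 2)) = r" using r by (simp only: powr_powr exps(1)) simp
    finally have "c0 powr (- 2 / (N - 2)) = \<alpha> powr (- 2 / (N - 2)) * r" .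
    then show ?thesis using a by (simp add: powr_minus_divide)
  qed
  finally show "e \<le> r" .
  show "\<alpha> powr (- 2 / (N - 2)) * c0 powr (2 / (N - 2)) = 1 / r"
  proof -
    have "c0 powr (2 / (N - 2)) = \<alpha> powr (2 / (N - 2)) * (r powr (- (N - 2) / 2)) powr (2 / (N - 2))"
      using a r by (simp add: c0 powr_mult)
    also have "(r powr (- (N - 2) / 2)) powr (2 / (N - 2)) = r powr (-1)" by (simp only: powr_powr exps(2))
    finally show ?thesis using a r by (simp add: powr_minus_divide powr_minus)
  qed
  show "\<alpha> * e powr (- ((N - 2) / 2)) = c"
  proof -
    have "e powr (- ((N - 2) / 2)) = (\<alpha> powr (2 / (N - 2))) powr (- ((N - 2) / 2)) * (c powr (- 2 / (N - 2))) powr (- ((N - 2) / 2))"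
      unfolding e_def using a cp by (simp add: powr_mult)
    also have "\<dots> = \<alpha> powr (-1) * c" using a cp by (simp only: powr_powr exps(3,4)) simp
    finally show ?thesis using a by (simp add: powr_minus)
  qed
qed

lemma inner_radius_facts:
  fixes e r :: real
  assumes e: "e > 0" "e \<le> r"
  defines "R \<equiv> (sqrt (e^2 + 4 * r^2) - e) / 2"
  shows "R > 0" "R < r" "r / 2 \<le> R" "r^2 - R^2 = e * R"
proof -
  have r: "r > 0" using e by simp
  have s1: "sqrt (e^2 + 4 * r^2) > e"
    using r e by (simp add: real_less_rsqrt power2_eq_square)
  show "R > 0" using s1 by (simp add: R_def)
  have "sqrt (e^2 + 4 * r^2) < e + 2 * r"
    using r e by (intro real_sqrt_less_iff[THEN iffD2] real_less_lsqrt) (auto simp: power2_eq_square algebra_simps)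
  then show "R < r" by (simp add: R_def)
  have "r + e \<le> sqrt (e^2 + 4 * r^2)"
    using r e by (intro real_le_rsqrt) (auto simp: power2_eq_square algebra_simps)
  then show "r / 2 \<le> R" by (simp add: R_def)
  have sq: "(sqrt (e^2 + 4 * r^2))^2 = e^2 + 4 * r^2" by simp
  show "r^2 - R^2 = e * R" unfolding R_def using sq
    by (simp add: power2_eq_square field_simps)
qed

lemma inner_radius_gap_le:
  fixes r e R d :: real
  assumes e: "e > 0" and r: "r > 0" and R: "R > 0" "r / 2 \<le> R" "r^2 - R^2 = e * R"
    and d: "d \<ge> 0"
  shows "(r + d)^2 - R^2 \<le> 2 * R * ((2 + (1 / r) * d) * d + e)"
proof -
  have "(r + d)^2 - R^2 = e * R + 2 * r * d + d^2" using R(3) by (simp add: power2_eq_square algebra_simps)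
  moreover have "2 * r * d \<le> 4 * R * d" using R(2) d by (simp add: mult_right_mono)
  moreover have "r * d^2 \<le> 2 * R * d^2" using mult_right_mono[of r "2*R" "d^2"] R(2) by simp
  then have "d^2 \<le> 2 * R * d^2 / r" using r by (simp add: pos_le_divide_eq mult.commute)
  moreover have "e * R \<le> 2 * R * e" using e R by simp
  moreover have "2 * R * ((2 + (1 / r) * d) * d + e) = 4 * R * d + 2 * R * d^2 / r + 2 * R * e"
    using r by (simp add: field_simps power2_eq_square)
  ultimately show ?thesis by linarith
qed

lemma canonical_lower_estimate:
  fixes N \<alpha> r e R d \<rho> :: real
  assumes N: "N \<ge> 3" and a: "\<alpha> > 0" and e: "e > 0" and R: "R > 0" "R < r" "r / 2 \<le> R" "r^2 - R^2 = e * R"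
    and d: "d \<ge> 0" and \<rho>: "r \<le> \<rho>" "\<rho> \<le> r + d"
  shows "\<alpha> / (2 powr ((N - 2) / 2) * ((2 + (1 / r) * d) * d + e) powr ((N - 2) / 2))
         \<le> \<alpha> * (R / (\<rho>^2 - R^2)) powr ((N - 2) / 2)"
proof -
  define k where "k = (N - 2) / 2"
  have k: "k \<ge> 0" using N by (simp add: k_def)
  have r: "r > 0" using R by simp
  define X where "X = (2 + (1 / r) * d) * d + e"
  have "(2 + (1 / r) * d) * d \<ge> 0" using d r by simp
  then have Xp: "X > 0" using e unfolding X_def by linarith
  have sp: "\<rho>^2 - R^2 > 0" using power_strict_mono[of R \<rho> 2] R \<rho> by simp
  have s_le: "\<rho>^2 - R^2 \<le> (r + d)^2 - R^2" using \<rho> r by (simp add: power_mono)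
  have "(r + d)^2 - R^2 \<le> 2 * R * X"
    unfolding X_def by (rule inner_radius_gap_le[OF e r R(1,3,4) d])
  then have "\<rho>^2 - R^2 \<le> 2 * R * X" using s_le by linarith
  then have le: "1 / (2 * X) \<le> R / (\<rho>^2 - R^2)" using sp Xp R by (simp add: field_simps)
  have "\<alpha> / (2 powr k * X powr k) = \<alpha> * (1 / (2 * X)) powr k"
    using Xp by (simp add: powr_mult powr_divide)
  also have "\<dots> \<le> \<alpha> * (R / (\<rho>^2 - R^2)) powr k"
    using powr_mono2[OF k _ le] Xp a by (simp add: mult_left_mono)
  finally show ?thesis unfolding k_def X_def .
qed

lemma exterior_canonical_le:
  fixes \<alpha> e r R k :: real
  assumes "\<alpha> > 0" "e > 0" "R > 0" "r\<^sup>2 - R\<^sup>2 = e * R" "k \<ge> 0" "0 \<le> r" "r \<le> \<rho>"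
  shows "\<alpha> * (R / (\<rho>\<^sup>2 - R\<^sup>2)) powr k \<le> \<alpha> * e powr (- k)"
proof -
  have "r\<^sup>2 \<le> \<rho>\<^sup>2" using assms(6,7) by (simp add: power_mono)
  then have "e * R \<le> \<rho>\<^sup>2 - R\<^sup>2" using assms(4) by simp
  moreover have "e * R > 0" using assms(2,3) by simp
  ultimately have "R / (\<rho>\<^sup>2 - R\<^sup>2) \<le> R / (e * R)"
    using assms(3) by (intro divide_left_mono) auto
  also have "\<dots> = e powr (- 1)" using assms(2,3) by (simp add: powr_minus divide_inverse)
  moreover have "0 \<le> R / (\<rho>\<^sup>2 - R\<^sup>2)" using \<open>e * R > 0\<close> \<open>e * R \<le> _\<close> assms(3) by simp
  ultimately have "(R / (\<rho>\<^sup>2 - R\<^sup>2)) powr k \<le> (e powr (- 1)) powr k"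
    using assms(5) by (intro powr_mono2) auto
  also have "(e powr (- 1)) powr k = e powr (- k)" by (simp only: powr_powr) simp
  finally show ?thesis using assms(1) by simp
qed

section \<open>The lower bound\<close>

text \<open>A classical solution scaled by t < 1 is a strict sub-solution, since -A^(tu) is
  t^(-4/(n-2)) > 1 times -A^u; so it cannot touch a super-solution from below.\<close>
lemma visc_super_not_touched_by_scaled_solution:
  fixes w :: "real^'n \<Rightarrow> ereal" and u :: "real^'n \<Rightarrow> real"
  assumes n3: "CARD('n) \<ge> 3" and st: "structural f \<Gamma>" and vs: "visc_super f \<Gamma> \<Omega> w"
    and "open \<Omega>" "\<Omega> \<subseteq> S" and Hc: "continuous_on S Hu"
    and sol: "\<forall>x\<in>S. u x > 0 \<and> (u has_derivative (\<lambda>h. Du x \<bullet> h)) (at x) \<and>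
                (Du has_derivative (\<lambda>h. Hu x *v h)) (at x) \<and>
                eigvals (- conf_hess (u x) (Du x) (Hu x)) \<in> \<Gamma> \<and>
                f (eigvals (- conf_hess (u x) (Du x) (Hu x))) = 1"
    and t: "0 < t" "t < 1" and z: "z \<in> \<Omega>" "w z = ereal (t * u z)" "transpose (Hu z) = Hu z"
    and below: "\<forall>x\<in>\<Omega>. ereal (t * u x) \<le> w x"
  shows False
proof -
  have cont: "continuous_on \<Omega> (\<lambda>x. t *\<^sub>R Hu x)"
    using continuous_on_subset[OF Hc \<open>\<Omega> \<subseteq> S\<close>] by (intro continuous_intros)
  have deriv: "((\<lambda>x. t * u x) has_derivative (\<lambda>h. (t *\<^sub>R Du x) \<bullet> h)) (at x) \<and>
      ((\<lambda>x. t *\<^sub>R Du x) has_derivative (\<lambda>h. (t *\<^sub>R Hu x) *v h)) (at x)" if "x \<in> \<Omega>" for x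
  proof -
    have "x \<in> S" using that \<open>\<Omega> \<subseteq> S\<close> by blast
    then have "((\<lambda>x. t * u x) has_derivative (\<lambda>h. t * (Du x \<bullet> h))) (at x)"
      and "((\<lambda>x. t *\<^sub>R Du x) has_derivative (\<lambda>h. t *\<^sub>R (Hu x *v h))) (at x)"
      using sol by (auto intro: has_derivative_mult_right has_derivative_scaleR_right)
    then show ?thesis by (simp add: scaleR_matrix_vector_assoc)
  qed
  have near: "\<forall>\<^sub>F x in at z. ereal (t * u x) \<le> w x"
    using eventually_at_in_open'[OF \<open>open \<Omega>\<close> z(1)] by (rule eventually_mono) (use below in blast)
  have test_fn: "\<And>\<phi> D\<phi> H\<phi>. continuous_on \<Omega> H\<phi> \<and>
      (\<forall>x\<in>\<Omega>. (\<phi> has_derivative (\<lambda>h. D\<phi> x \<bullet> h)) (at x) \<and> (D\<phi> has_derivative (\<lambda>h. H\<phi> x *v h)) (at x)) \<and>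
      w z = ereal (\<phi> z) \<and> (\<forall>\<^sub>F x in at z. ereal (\<phi> x) \<le> w x) \<Longrightarrow>
      eigvals (- conf_hess (\<phi> z) (D\<phi> z) (H\<phi> z)) \<notin> closure \<Gamma> \<or>
      f (eigvals (- conf_hess (\<phi> z) (D\<phi> z) (H\<phi> z))) \<le> 1"
    using vs z(1) unfolding visc_super_def by blast
  have test: "eigvals (- conf_hess (t * u z) (t *\<^sub>R Du z) (t *\<^sub>R Hu z)) \<notin> closure \<Gamma> \<or>
      f (eigvals (- conf_hess (t * u z) (t *\<^sub>R Du z) (t *\<^sub>R Hu z))) \<le> 1"
    using test_fn[where \<phi> = "\<lambda>x. t * u x" and D\<phi> = "\<lambda>x. t *\<^sub>R Du x" and H\<phi> = "\<lambda>x. t *\<^sub>R Hu x"] cont deriv z(2) near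
    by blast
  define s where "s = t powr (- 4 / (real CARD('n) - 2))"
  have "s > 1" unfolding s_def using powr_less_mono2_neg[of "- 4 / (real CARD('n) - 2)" t 1] t n3 by simp
  have "z \<in> S" using z(1) \<open>\<Omega> \<subseteq> S\<close> by blast
  then have "- conf_hess (t * u z) (t *\<^sub>R Du z) (t *\<^sub>R Hu z) = s *\<^sub>R - conf_hess (u z) (Du z) (Hu z)"
    using conf_hess_scaleR[OF n3 t(1)] sol by (simp add: s_def)
  moreover have "transpose (- conf_hess (u z) (Du z) (Hu z)) = - conf_hess (u z) (Du z) (Hu z)"
    using z(3) by (rule neg_conf_hess_symmetric)
  ultimately show False
    using structural_eigvals_scaleR_gt_1[OF st _ _ _ \<open>s > 1\<close>] test sol \<open>z \<in> S\<close> by fastforce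
qed

lemma exterior_canonical_below_supersolution:
  fixes w :: "real^'n \<Rightarrow> ereal"
  assumes n3: "CARD('n) \<ge> 3" and st: "structural f \<Gamma>" and cc: "canonical_const f \<Gamma> \<alpha>"
    and \<Omega>: "open \<Omega>" "bounded \<Omega>" and vs: "visc_super f \<Gamma> \<Omega> w" and w_pos: "\<forall>x\<in>\<Omega>. w x > 0"
    and bdry: "\<forall>\<xi>\<in>frontier \<Omega>. Liminf (at \<xi> within \<Omega>) w \<ge> ereal c" and "c > 0"
    and R: "R > 0" and sub: "\<Omega> \<subseteq> - cball y R"
    and le_c: "\<forall>z\<in>\<Omega>. \<alpha> * (R / ((norm (z - y))\<^sup>2 - R\<^sup>2)) powr ((real CARD('n) - 2) / 2) \<le> c"
  shows "\<forall>z\<in>\<Omega>. ereal (\<alpha> * (R / ((norm (z - y))\<^sup>2 - R\<^sup>2)) powr ((real CARD('n) - 2) / 2)) \<le> w z"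
proof -
  define u where "u z = \<alpha> * (R / ((norm (z - y))\<^sup>2 - R\<^sup>2)) powr ((real CARD('n) - 2) / 2)" for z
  have "classical_sol f \<Gamma> (- cball y R) u"
    using cc R unfolding canonical_const_def u_def by blast
  then obtain Du Hu where Hc: "continuous_on (- cball y R) Hu"
    and sol: "\<forall>x\<in>- cball y R. u x > 0 \<and> (u has_derivative (\<lambda>h. Du x \<bullet> h)) (at x) \<and>
               (Du has_derivative (\<lambda>h. Hu x *v h)) (at x) \<and>
               eigvals (- conf_hess (u x) (Du x) (Hu x)) \<in> \<Gamma> \<and>
               f (eigvals (- conf_hess (u x) (Du x) (Hu x))) = 1"
    unfolding classical_sol_def by blast
  have "\<forall>x\<in>\<Omega>. ereal (u x) \<le> w x"
  proof (rule comparison_by_scaling[OF \<Omega> _ w_pos bdry \<open>c > 0\<close>])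
    show "lsc_on \<Omega> w" using vs unfolding visc_super_def by blast
    show "continuous_on \<Omega> u"
      using sol sub by (intro continuous_at_imp_continuous_on ballI has_derivative_continuous) blast
    show "\<forall>x\<in>\<Omega>. 0 < u x \<and> u x \<le> c" using sol sub le_c unfolding u_def by blast
  next
    fix t z assume t: "0 < t" "t < 1" and z: "z \<in> \<Omega>" "w z = ereal (t * u z)"
      and below: "\<forall>x\<in>\<Omega>. ereal (t * u x) \<le> w x"
    have "Hu z = canonical_hess \<alpha> R ((real CARD('n) - 2) / 2) y z"
      using sol sub z(1) by (intro exterior_canonical_hessian[OF R, of u]) (auto simp: u_def)
    then have "transpose (Hu z) = Hu z" by (simp add: canonical_hess_symmetric)
    then show False
      by (rule visc_super_not_touched_by_scaled_solution[OF n3 st vs \<Omega>(1) sub Hc sol t z _ below])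
  qed
  then show ?thesis by (simp add: u_def)
qed

lemma supersolution_lower_bound:
  fixes w :: "real^'n \<Rightarrow> ereal"
  defines "N \<equiv> real CARD('n)"
  assumes n3: "CARD('n) \<ge> 3" and st: "structural f \<Gamma>" and cc: "canonical_const f \<Gamma> \<alpha>"
    and \<Omega>: "open \<Omega>" "bounded \<Omega>" and "r > 0" and ext: "\<forall>\<xi>\<in>frontier \<Omega>. exterior_ball \<Omega> r \<xi>"
    and c0: "c0 = \<alpha> * r powr (- (N - 2) / 2)"
    and vs: "visc_super f \<Gamma> \<Omega> w" and w_pos: "\<forall>x\<in>\<Omega>. w x > 0" and "c \<ge> c0"
    and bdry: "\<forall>\<xi>\<in>frontier \<Omega>. Liminf (at \<xi> within \<Omega>) w \<ge> ereal c"
    and x: "x \<in> \<Omega>" and d: "d = infdist x (frontier \<Omega>)"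
  shows "w x \<ge> ereal (\<alpha> / (2 powr ((N - 2) / 2) *
             ((2 + \<alpha> powr (- 2 / (N - 2)) * c0 powr (2 / (N - 2)) * d) * d
              + \<alpha> powr (2 / (N - 2)) * c powr (- 2 / (N - 2))) powr ((N - 2) / 2)))"
proof -
  have N3: "N \<ge> 3" using n3 by (simp add: N_def)
  have "\<alpha> > 0" using cc unfolding canonical_const_def by simp
  define e where "e = \<alpha> powr (2 / (N - 2)) * c powr (- 2 / (N - 2))"
  note E = boundary_constant_facts[OF N3 \<open>\<alpha> > 0\<close> \<open>r > 0\<close> c0 \<open>c \<ge> c0\<close>, folded e_def]
  define R where "R = (sqrt (e\<^sup>2 + 4 * r\<^sup>2) - e) / 2"
  note RF = inner_radius_facts[OF E(3,4), folded R_def]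
  have "frontier \<Omega> \<noteq> {}"
    using \<Omega> x by (intro frontier_not_empty) (auto dest: bounded_subset[of UNIV])
  then obtain \<xi> where \<xi>: "\<xi> \<in> frontier \<Omega>" "d = dist x \<xi>"
    using infdist_attains_inf[OF frontier_closed] unfolding d by blast
  obtain y where y: "dist y \<xi> = r" "ball y r \<inter> \<Omega> = {}" using ext \<xi>(1) unfolding exterior_ball_def by blast
  have far: "r \<le> norm (z - y)" if "z \<in> \<Omega>" for z
  proof -
    have "z \<notin> ball y r" using y(2) that by blast
    then show ?thesis by (simp add: dist_norm norm_minus_commute not_less)
  qed
  then have "\<Omega> \<subseteq> - cball y R" using RF(2) by (force simp: dist_norm norm_minus_commute)
  moreover have "\<alpha> * (R / ((norm (z - y))\<^sup>2 - R\<^sup>2)) powr ((N - 2) / 2) \<le> c" if "z \<in> \<Omega>" for z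
    using exterior_canonical_le[OF \<open>\<alpha> > 0\<close> E(3) RF(1,4), of "(N - 2) / 2", OF _ _ far[OF that]]
      N3 \<open>r > 0\<close> E(6) by simp
  ultimately have "ereal (\<alpha> * (R / ((norm (x - y))\<^sup>2 - R\<^sup>2)) powr ((N - 2) / 2)) \<le> w x"
    using exterior_canonical_below_supersolution[OF n3 st cc \<Omega> vs w_pos bdry E(2) RF(1)] x
    unfolding N_def by blast
  moreover have "norm (x - y) \<le> r + d"
    using dist_triangle[of x y \<xi>] \<xi>(2) y(1) by (simp add: dist_norm norm_minus_commute)
  then have "\<alpha> / (2 powr ((N - 2) / 2) * ((2 + (1 / r) * d) * d + e) powr ((N - 2) / 2))
         \<le> \<alpha> * (R / ((norm (x - y))\<^sup>2 - R\<^sup>2)) powr ((N - 2) / 2)"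
    using canonical_lower_estimate[OF N3 \<open>\<alpha> > 0\<close> E(3) RF] far[OF x] d infdist_nonneg by blast
  ultimately show ?thesis unfolding E(5) e_def by (meson ereal_less_eq(3) order_trans)
qed

theorem lemma3p3:
  fixes \<Omega> :: "(real^'n) set" and f :: "real^'n \<Rightarrow> real" and \<Gamma> :: "(real^'n) set"
    and \<alpha> :: real
  assumes "CARD('n) \<ge> 3"
    and "smooth_bdd_domain \<Omega>"
    and "structural f \<Gamma>"
    and "canonical_const f \<Gamma> \<alpha>"
  shows "\<exists>c0>0. \<forall>w c.
     (visc_super f \<Gamma> \<Omega> w \<and> (\<forall>x\<in>\<Omega>. w x > 0) \<and> c \<ge> c0 \<and>
      (\<forall>\<xi>\<in>frontier \<Omega>. Liminf (at \<xi> within \<Omega>) w \<ge> ereal c))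
     \<longrightarrow> (\<forall>x\<in>\<Omega>.
          let n = real CARD('n); d = infdist x (frontier \<Omega>) in
          w x \<ge> ereal (\<alpha> / (2 powr ((n - 2) / 2) *
             ((2 + \<alpha> powr (- 2 / (n - 2)) * c0 powr (2 / (n - 2)) * d) * d
              + \<alpha> powr (2 / (n - 2)) * c powr (- 2 / (n - 2))) powr ((n - 2) / 2))))"
proof -
  have \<Omega>: "open \<Omega>" "bounded \<Omega>" using assms(2) unfolding smooth_bdd_domain_def by auto
  obtain r where "r > 0" and ext: "\<forall>\<xi>\<in>frontier \<Omega>. exterior_ball \<Omega> r \<xi>"
    using smooth_bdd_domain_uniform_exterior_ball[OF assms(2)] by blast
  define c0 where "c0 = \<alpha> * r powr (- (real CARD('n) - 2) / 2)"
  have "c0 > 0" using assms(4) \<open>r > 0\<close> unfolding c0_def canonical_const_def by simp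
  moreover have "w x \<ge> ereal (\<alpha> / (2 powr ((real CARD('n) - 2) / 2) *
       ((2 + \<alpha> powr (- 2 / (real CARD('n) - 2)) * c0 powr (2 / (real CARD('n) - 2))
              * infdist x (frontier \<Omega>)) * infdist x (frontier \<Omega>)
        + \<alpha> powr (2 / (real CARD('n) - 2)) * c powr (- 2 / (real CARD('n) - 2)))
         powr ((real CARD('n) - 2) / 2)))"
    if "visc_super f \<Gamma> \<Omega> w" "\<forall>x\<in>\<Omega>. w x > 0" "c \<ge> c0"
       "\<forall>\<xi>\<in>frontier \<Omega>. Liminf (at \<xi> within \<Omega>) w \<ge> ereal c" "x \<in> \<Omega>" for w c x
    using supersolution_lower_bound[OF assms(1,3,4) \<Omega> \<open>r > 0\<close> ext c0_def that refl] .
  ultimately show ?thesis unfolding Let_def by blast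
qed

end
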